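(* Let $S=\{0,1,2,\dots\}$, $\lambda,\mu>0$, $\theta=\lambda/\mu$, and let $X$ be the continuous-time Markov chain on $S$ with rates $q(i,i+1)=\lambda$; $q(i,i-k)=\mu$ for $i\ge1$, $1\le k\le i$; $q(i,i)=-(\lambda+i\mu)$; all other off-diagonal rates $0$. Let $\tau$ be a probability on $S$ with finite $m$-th moment for some integer $m\ge1$, $\mathbf P^{(\tau)}$ the law of $X$ with initial distribution $\tau$, $F^{(\tau)}_{X(t)}(x)=\mathbf P^{(\tau)}\{X(t)\le x\}$, $T(x)=\sum_{n\le x}\tau(n)$, $\Pi^*(x)=\sum_{n\le x}\pi^*(n)$ with $\pi^*(n)=\theta^n(n+1)/(\theta+1)_{n+1}$. Define $$h_m(x)=\sum_{\rho\ge0}\frac{e^{-\theta}\theta^\rho}{\rho!}(x+\rho)^{m-1}\ (x\ge0),\qquad \mathcal K_{h_m}(\tau,\pi^* )=\int_0^{\infty}h_m(x)|T(x)-\Pi^*(x)|\,dx.$$ Then for all $t\ge0$, $$\Big|\int_{\mathbb R}x^m\,d\big(F^{(\tau)}_{X(t)}(x)-\Pi^*(x)\big)\Big|\le m\,\mathcal K_{h_m}(\tau,\pi^* )\exp\{-\mu t-\theta(e^{-\mu t}+\mu t-1)\}.$$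
   Context: $(a)_n$ denotes the rising factorial $a(a+1)\cdots(a+n-1)$, $(a)_0=1$. *)

theory Defs
  imports "HOL-Analysis.Analysis"
begin

definition qrate :: "real \<Rightarrow> real \<Rightarrow> nat \<Rightarrow> nat \<Rightarrow> real" where
  "qrate lam mu i j = (if j = Suc i then lam else if j < i then mu else 0)"

definition qtot :: "real \<Rightarrow> real \<Rightarrow> nat \<Rightarrow> real" where
  "qtot lam mu i = lam + real i * mu"

text \<open>Iterates of the backward integral equation (Feller's construction of the
  minimal transition function of the Q-process).\<close>
fun Piter :: "real \<Rightarrow> real \<Rightarrow> nat \<Rightarrow> real \<Rightarrow> nat \<Rightarrow> nat \<Rightarrow> real" where
  "Piter lam mu 0 t i j = 0"
| "Piter lam mu (Suc n) t i j =
     (if i = j then exp (- qtot lam mu i * t) else 0)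
     + integral {0..t} (\<lambda>s. exp (- qtot lam mu i * s) *
          (\<Sum>k\<in>{..Suc i} - {i}. qrate lam mu i k * Piter lam mu n (t - s) k j))"

text \<open>Transition function p_t(i,j) = P(X(t)=j | X(0)=i) of the (minimal) chain.\<close>
definition ptrans :: "real \<Rightarrow> real \<Rightarrow> real \<Rightarrow> nat \<Rightarrow> nat \<Rightarrow> real" where
  "ptrans lam mu t i j = (SUP n. Piter lam mu n t i j)"

definition distX :: "real \<Rightarrow> real \<Rightarrow> (nat \<Rightarrow> real) \<Rightarrow> real \<Rightarrow> nat \<Rightarrow> real" where
  "distX lam mu tau t j = (\<Sum>i. tau i * ptrans lam mu t i j)"

definition pistar :: "real \<Rightarrow> nat \<Rightarrow> real" where
  "pistar \<theta> n = \<theta> ^ n * real (n + 1) / pochhammer (\<theta> + 1) (n + 1)"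

text \<open>Distribution function of a probability on nat, at real x \<ge> 0.\<close>
definition cdfN :: "(nat \<Rightarrow> real) \<Rightarrow> real \<Rightarrow> real" where
  "cdfN p x = (\<Sum>n\<in>{..nat \<lfloor>x\<rfloor>}. p n)"

definition hfun :: "real \<Rightarrow> nat \<Rightarrow> real \<Rightarrow> real" where
  "hfun \<theta> m x = (\<Sum>\<rho>. exp (- \<theta>) * \<theta> ^ \<rho> / fact \<rho> * (x + real \<rho>) ^ (m - 1))"

definition Kh :: "real \<Rightarrow> nat \<Rightarrow> (nat \<Rightarrow> real) \<Rightarrow> real" where
  "Kh \<theta> m tau = (LBINT x:{0..}. hfun \<theta> m x * \<bar>cdfN tau x - cdfN (pistar \<theta>) x\<bar>)"

end

theory Submission
  imports Defs
begin

text \<open>Write \<open>\<theta> = lam / mu\<close>, \<open>G k = \<theta>^k / (\<theta> + 1)_k\<close> for the tail of \<open>\<pi>\<^sup>*\<close>,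
  \<open>\<Lambda> t = \<theta> (1 - exp (-mu t))\<close> and \<open>b r k t = exp (-(lam + k mu) t) (\<Lambda> t)^r / r!\<close>.
  The tail probabilities of the chain have the closed form
  \<open>P\<^sub>i(X(t) \<ge> n) = G n + (\<Sum>k = 1..n. b (n - k) k t ([k \<le> i] - G k))\<close>.
  It solves the backward equations, and it is the transition function of the minimal chain since
  the iterates of the backward integral equation converge to it: the mass they still miss after
  \<open>n\<close> steps lies on paths with at least \<open>(n - i)/2\<close> upward jumps, a Poisson tail.

  Averaging over \<open>\<tau>\<close>, the tail of \<open>X(t)\<close> is \<open>G n + (\<Sum>k = 1..n. b (n - k) k t d k)\<close>, where
  \<open>d k\<close> is the difference of the tails of \<open>\<tau>\<close> and \<open>\<pi>\<^sup>*\<close>.  Abel summation with the weights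
  \<open>w n = n^m - (n - 1)^m\<close> turns the difference of the \<open>m\<close>-th moments into
  \<open>\<Sum>k. d k (\<Sum>r. w (k + r) b r k t)\<close>.  The Poisson weights of mean \<open>\<Lambda> t\<close> in the inner sum
  are dominated by Poisson weights of mean \<open>\<theta>\<close> at the cost of exactly the exponential factor of
  the theorem, and \<open>\<Sum>k. |d k| E w(k + Poisson \<theta>) = m K\<^sub>h(\<tau>, \<pi>\<^sup>*)\<close> because \<open>h\<^sub>m\<close> integrates over
  \<open>[k - 1, k)\<close> to \<open>E w(k + Poisson \<theta>) / m\<close>.\<close>

section \<open>Convolution with an exponential kernel\<close>

lemma integral_Icc_reflect:
  fixes g :: "real \<Rightarrow> real"
  assumes "continuous_on {0..t} g"
  shows "integral {0..t} (\<lambda>s. g (t - s)) = integral {0..t} g"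
proof -
  have "((\<lambda>x. g (-x)) has_integral integral {0..t} g) {-t..-0}"
    using assms integrable_continuous_real by (simp only: has_integral_reflect_real) blast
  then have "(((\<lambda>x. g (-x)) \<circ> (+) (-t)) has_integral integral {0..t} g) {0..t}"
    by (subst has_integral_shift_Icc_real) simp
  then show ?thesis by (simp add: o_def integral_unique)
qed

definition exp_conv :: "real \<Rightarrow> (real \<Rightarrow> real) \<Rightarrow> real \<Rightarrow> real" where
  "exp_conv q h t = integral {0..t} (\<lambda>s. exp (- q * s) * h (t - s))"

lemma exp_conv_integrable:
  fixes h :: "real \<Rightarrow> real"
  assumes "continuous_on {0..t} h"
  shows "(\<lambda>s. exp (- q * s) * h (t - s)) integrable_on {0..t}"
proof -
  have "continuous_on {0..t} (h \<circ> (\<lambda>s. t - s))"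
    by (rule continuous_on_compose) (auto intro!: continuous_intros continuous_on_subset[OF assms])
  then show ?thesis
    by (intro integrable_continuous_real continuous_on_mult) (auto intro!: continuous_intros simp: o_def)
qed

lemma exp_conv_eq:
  assumes "continuous_on {0..t} h"
  shows "exp_conv q h t = exp (- q * t) * integral {0..t} (\<lambda>r. exp (q * r) * h r)"
proof -
  have "exp_conv q h t = integral {0..t} (\<lambda>s. exp (- q * t) * (exp (q * (t - s)) * h (t - s)))"
    unfolding exp_conv_def by (rule integral_cong) (simp add: algebra_simps flip: exp_add)
  also have "\<dots> = exp (- q * t) * integral {0..t} (\<lambda>r. exp (q * r) * h r)"
    using integral_Icc_reflect[of t "\<lambda>r. exp (q * r) * h r"] assms
    by (simp add: continuous_intros)
  finally show ?thesis .
qed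

lemma continuous_on_exp_conv:
  assumes "continuous_on {0..T} h"
  shows "continuous_on {0..T} (exp_conv q h)"
proof -
  have "continuous_on {0..T} (\<lambda>t. exp (- q * t) * integral {0..t} (\<lambda>r. exp (q * r) * h r))"
    by (intro continuous_intros indefinite_integral_continuous_1 integrable_continuous_real assms)
  then show ?thesis
    by (rule continuous_on_eq) (auto simp: exp_conv_eq[OF continuous_on_subset[OF assms]])
qed

lemma exp_conv_mono:
  assumes "continuous_on {0..t} h1" "continuous_on {0..t} h2" "\<And>r. r \<in> {0..t} \<Longrightarrow> h1 r \<le> h2 r"
  shows "exp_conv q h1 t \<le> exp_conv q h2 t"
  unfolding exp_conv_def
  by (rule integral_le[OF exp_conv_integrable[OF assms(1)] exp_conv_integrable[OF assms(2)]])
     (auto intro!: mult_left_mono assms(3))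

lemma exp_conv_nonneg:
  assumes "continuous_on {0..t} h" "\<And>r. r \<in> {0..t} \<Longrightarrow> 0 \<le> h r"
  shows "0 \<le> exp_conv q h t"
  unfolding exp_conv_def
  by (rule integral_nonneg[OF exp_conv_integrable[OF assms(1)]]) (auto intro!: assms(2) mult_nonneg_nonneg)

lemma exp_conv_diff:
  assumes "continuous_on {0..t} h1" "continuous_on {0..t} h2"
  shows "exp_conv q (\<lambda>r. h1 r - h2 r) t = exp_conv q h1 t - exp_conv q h2 t"
  unfolding exp_conv_def
  by (subst integral_diff[OF exp_conv_integrable[OF assms(1)] exp_conv_integrable[OF assms(2)], symmetric])
     (simp add: algebra_simps)

lemma exp_conv_cmult: "exp_conv q (\<lambda>r. c * h r) t = c * exp_conv q h t"
  unfolding exp_conv_def by (simp add: algebra_simps)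

lemma abs_exp_conv_le:
  assumes "continuous_on {0..t} h"
  shows "\<bar>exp_conv q h t\<bar> \<le> exp_conv q (\<lambda>r. \<bar>h r\<bar>) t"
proof -
  have "continuous_on {0..t} (\<lambda>r. \<bar>h r\<bar>)" by (intro continuous_intros assms)
  then have "exp_conv q h t \<le> exp_conv q (\<lambda>r. \<bar>h r\<bar>) t"
    and "exp_conv q (\<lambda>r. - 1 * h r) t \<le> exp_conv q (\<lambda>r. \<bar>h r\<bar>) t"
    by (auto intro!: exp_conv_mono continuous_intros assms)
  then show ?thesis unfolding exp_conv_cmult by linarith
qed

lemma variation_of_constants:
  assumes der: "\<And>x. (f has_real_derivative (- q * f x + h x)) (at x)"
    and "continuous_on {0..t} h" and "0 \<le> t"
  shows "f t = exp (- q * t) * f 0 + exp_conv q h t"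
proof -
  have "((\<lambda>r. exp (q * r) * f r) has_real_derivative (exp (q * r) * h r)) (at r)" for r
    by (rule derivative_eq_intros der refl | simp add: algebra_simps)+
  then have "((\<lambda>r. exp (q * r) * h r) has_integral (exp (q * t) * f t - exp (q * 0) * f 0)) {0..t}"
    by (intro fundamental_theorem_of_calculus assms(3))
       (simp add: has_real_derivative_iff_has_vector_derivative has_vector_derivative_at_within)
  then have "integral {0..t} (\<lambda>r. exp (q * r) * h r) = exp (q * t) * f t - f 0"
    by (simp add: integral_unique)
  then have "exp (- q * t) * f 0 + exp_conv q h t = exp (- q * t) * exp (q * t) * f t"
    unfolding exp_conv_eq[OF assms(2)] distrib_left[symmetric] by simp
  then show ?thesis by (simp flip: exp_add)
qed

section \<open>The closed-form transition function\<close>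

lemma sums_exp_real: "(\<lambda>n. x ^ n / fact n) sums exp (x::real)"
  using exp_converges[of x] by (simp add: divide_inverse mult.commute)

lemma power_div_fact_le_exp:
  assumes "0 \<le> (y::real)"
  shows "y ^ a / fact a \<le> exp y"
  using sum_le_suminf[OF sums_summable[OF sums_exp_real[of y]], of "{a}"]
    sums_unique[OF sums_exp_real[of y]] assms by simp

text \<open>\<open>pitail th k = (\<Sum>n\<ge>k. pistar th n)\<close>, the tail of the stationary law
  (see \<open>pistar_eq_pitail_diff\<close>).\<close>

definition pitail :: "real \<Rightarrow> nat \<Rightarrow> real" where
  "pitail th k = th ^ k / pochhammer (th + 1) k"

lemma pitail_0 [simp]: "pitail th 0 = 1"
  by (simp add: pitail_def)

lemma pitail_Suc: "pitail th (Suc k) = th * pitail th k / (th + 1 + real k)"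
  by (simp add: pitail_def pochhammer_rec' field_simps)

lemma pitail_recurrence:
  assumes "th > 0"
  shows "th * pitail th k = (th + real (Suc k)) * pitail th (Suc k)"
  using assms unfolding pitail_Suc by (simp add: field_simps)

lemma pitail_nonneg: "th > 0 \<Longrightarrow> 0 \<le> pitail th k"
  unfolding pitail_def by (intro divide_nonneg_pos pochhammer_pos) auto

lemma pitail_Suc_le:
  assumes "th > 0"
  shows "pitail th (Suc k) \<le> pitail th k"
proof -
  have "th * pitail th k \<le> (th + 1 + real k) * pitail th k"
    using assms pitail_nonneg[OF assms, of k] by (intro mult_right_mono) auto
  then show ?thesis
    using assms by (simp add: pitail_Suc divide_le_eq mult.commute)
qed

lemma pitail_le_1: "th > 0 \<Longrightarrow> pitail th k \<le> 1"
  by (induction k) (auto intro: order.trans[OF pitail_Suc_le])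

lemma pitail_le_power_fact:
  assumes "th > 0"
  shows "pitail th k \<le> th ^ k / fact k"
proof (induction k)
  case (Suc k)
  have "pitail th (Suc k) \<le> th * pitail th k / (1 + real k)"
    unfolding pitail_Suc using assms pitail_nonneg[OF assms, of k]
    by (intro divide_left_mono mult_nonneg_nonneg) auto
  also have "\<dots> \<le> th * (th ^ k / fact k) / (1 + real k)"
    using assms Suc by (intro divide_right_mono mult_left_mono) auto
  finally show ?case by (simp add: field_simps)
qed simp

lemma pitail_tendsto_0:
  assumes "th > 0"
  shows "pitail th \<longlonglongrightarrow> 0"
proof (rule Lim_null_comparison)
  show "(\<lambda>k. th ^ k / fact k) \<longlonglongrightarrow> 0"
    using summable_LIMSEQ_zero[OF sums_summable[OF sums_exp_real]] .
  show "\<forall>\<^sub>F k in sequentially. norm (pitail th k) \<le> th ^ k / fact k"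
    using pitail_le_power_fact[OF assms] pitail_nonneg[OF assms] by auto
qed

lemma pistar_eq_pitail_diff:
  assumes "th > 0"
  shows "pistar th n = pitail th n - pitail th (Suc n)"
proof -
  have "pistar th n = pitail th n * (real n + 1) / (th + 1 + real n)"
    by (simp add: pistar_def pitail_def pochhammer_rec' ac_simps)
  also have "\<dots> = pitail th n - pitail th (Suc n)"
    unfolding pitail_Suc using assms by (simp add: field_simps)
  finally show ?thesis .
qed

text \<open>\<open>Lam lam mu t = \<integral>\<^sub>0\<^sup>t lam exp(-mu s) ds\<close>.\<close>

definition Lam :: "real \<Rightarrow> real \<Rightarrow> real \<Rightarrow> real" where
  "Lam lam mu t = lam / mu * (1 - exp (- mu * t))"

definition bcoef :: "real \<Rightarrow> real \<Rightarrow> nat \<Rightarrow> nat \<Rightarrow> real \<Rightarrow> real" where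
  "bcoef lam mu r k t = exp (- (lam + mu * real k) * t) * Lam lam mu t ^ r / fact r"

lemma Lam_bounds:
  assumes "lam > 0" "mu > 0" "t \<ge> 0"
  shows "0 \<le> Lam lam mu t" "Lam lam mu t \<le> lam / mu"
proof -
  have "exp (- mu * t) \<le> 1" "exp (- mu * t) > 0" using assms by auto
  then show "0 \<le> Lam lam mu t" "Lam lam mu t \<le> lam / mu"
    unfolding Lam_def using assms
    by (auto intro!: mult_nonneg_nonneg simp: mult_le_cancel_left1 divide_right_mono)
qed

lemma bcoef_at_0: "bcoef lam mu r k 0 = (if r = 0 then 1 else 0)"
  by (simp add: bcoef_def Lam_def)

lemma continuous_on_bcoef: "continuous_on A (bcoef lam mu r k)"
  unfolding bcoef_def Lam_def by (intro continuous_intros) auto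

lemma bcoef_nonneg:
  assumes "lam > 0" "mu > 0" "t \<ge> 0"
  shows "0 \<le> bcoef lam mu r k t"
  unfolding bcoef_def using Lam_bounds[OF assms] by simp

lemma bcoef_le:
  assumes "lam > 0" "mu > 0" "t \<ge> 0"
  shows "bcoef lam mu r k t \<le> (lam / mu) ^ r / fact r"
proof -
  have "0 \<le> (lam + mu * real k) * t"
    using assms by simp
  then have "- (lam + mu * real k) * t \<le> 0"
    by linarith
  then have "exp (- (lam + mu * real k) * t) \<le> 1"
    by simp
  moreover have "Lam lam mu t ^ r \<le> (lam / mu) ^ r"
    using Lam_bounds[OF assms] by (intro power_mono) auto
  ultimately have "exp (- (lam + mu * real k) * t) * Lam lam mu t ^ r \<le> 1 * (lam / mu) ^ r"
    using Lam_bounds[OF assms] by (intro mult_mono) auto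
  then show ?thesis unfolding bcoef_def by (simp add: divide_right_mono)
qed

lemma bcoef_deriv:
  assumes "mu \<noteq> 0"
  shows "(bcoef lam mu r k has_real_derivative
      - (lam + mu * real k) * bcoef lam mu r k t
      + (if r = 0 then 0 else lam * bcoef lam mu (r - 1) (Suc k) t)) (at t)"
proof (cases r)
  case 0
  then show ?thesis unfolding bcoef_def by (auto intro!: derivative_eq_intros)
next
  case (Suc r')
  have "(Lam lam mu has_real_derivative lam * exp (- mu * t)) (at t)"
    unfolding Lam_def using assms by (auto intro!: derivative_eq_intros)
  then have "(bcoef lam mu r k has_real_derivative
      - (lam + mu * real k) * exp (- (lam + mu * real k) * t) * Lam lam mu t ^ r / fact r
      + exp (- (lam + mu * real k) * t) * (real r * Lam lam mu t ^ (r - 1) * (lam * exp (- mu * t))) / fact r) (at t)"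
    unfolding bcoef_def by (auto intro!: derivative_eq_intros simp: field_simps)
  moreover have "exp (- (lam + mu * real k) * t) * (real r * Lam lam mu t ^ (r - 1) * (lam * exp (- mu * t))) / fact r
      = lam * bcoef lam mu r' (Suc k) t"
  proof -
    have "exp (- (lam + mu * real (Suc k)) * t) = exp (- (lam + mu * real k) * t) * exp (- mu * t)"
      by (simp add: algebra_simps flip: exp_add)
    moreover have "fact r = real r * fact r'" "real r > 0" using Suc by simp_all
    ultimately show ?thesis
      unfolding bcoef_def Suc diff_Suc_1 by (simp add: field_simps del: of_nat_Suc)
  qed
  ultimately show ?thesis using Suc by (simp add: bcoef_def algebra_simps)
qed

definition tail_gap :: "real \<Rightarrow> nat \<Rightarrow> nat \<Rightarrow> real" where
  "tail_gap th k i = (if k \<le> i then 1 else 0) - pitail th k"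

lemma tail_gap_0 [simp]: "tail_gap th 0 i = 0"
  by (simp add: tail_gap_def)

lemma abs_tail_gap_le: "th > 0 \<Longrightarrow> \<bar>tail_gap th k i\<bar> \<le> 1"
  unfolding tail_gap_def using pitail_nonneg[of th k] pitail_le_1[of th k] by auto

lemma generator_tail_gap:
  assumes "lam > 0" "mu > 0" "k \<ge> 1"
  shows "lam * tail_gap (lam / mu) k (Suc i) + mu * (\<Sum>k'<i. tail_gap (lam / mu) k k')
           - (lam + real i * mu) * tail_gap (lam / mu) k i
       = lam * tail_gap (lam / mu) (k - 1) i - (lam + mu * real k) * tail_gap (lam / mu) k i"
proof -
  obtain k' where k: "k = Suc k'" using assms(3) by (cases k) auto
  have "lam / mu * pitail (lam / mu) k' = (lam / mu + real k) * pitail (lam / mu) k"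
    using pitail_recurrence[of "lam / mu" k'] assms k by simp
  then have rec: "lam * pitail (lam / mu) k' = (lam + mu * real k) * pitail (lam / mu) k"
    using assms by (simp add: field_simps)
  have "(\<Sum>k'<i. (if k \<le> k' then 1 else 0 :: real)) = real (i - k)"
    by (induction i) (auto simp: Suc_diff_le)
  then have "(\<Sum>k'<i. tail_gap (lam / mu) k k') = real (i - k) - real i * pitail (lam / mu) k"
    unfolding tail_gap_def by (simp add: sum_subtractf)
  then show ?thesis
    using rec k unfolding \<open>(\<Sum>k'<i. tail_gap (lam / mu) k k') = _\<close> by (cases "k \<le> i") (auto simp: tail_gap_def algebra_simps of_nat_diff)
qed

text \<open>\<open>tail_prob lam mu n t i\<close> is \<open>P(X(t) \<ge> n | X(0) = i)\<close>.\<close>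

definition tail_prob :: "real \<Rightarrow> real \<Rightarrow> nat \<Rightarrow> real \<Rightarrow> nat \<Rightarrow> real" where
  "tail_prob lam mu n t i =
     pitail (lam / mu) n + (\<Sum>k\<in>{1..n}. bcoef lam mu (n - k) k t * tail_gap (lam / mu) k i)"

lemma continuous_on_tail_prob: "continuous_on A (\<lambda>t. tail_prob lam mu n t i)"
  unfolding tail_prob_def by (intro continuous_intros continuous_on_bcoef)

lemma tail_prob_at_0: "tail_prob lam mu n 0 i = (if n \<le> i then 1 else 0)"
proof (cases n)
  case (Suc n')
  have "(\<Sum>k\<in>{1..n}. bcoef lam mu (n - k) k 0 * tail_gap (lam / mu) k i)
      = (\<Sum>k\<in>{n}. tail_gap (lam / mu) k i)"
    by (rule sum.mono_neutral_cong_right) (auto simp: bcoef_at_0 Suc)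
  then show ?thesis by (simp add: tail_prob_def tail_gap_def)
qed (simp add: tail_prob_def)

lemma abs_tail_prob_le:
  assumes "lam > 0" "mu > 0" "t \<ge> 0"
  shows "\<bar>tail_prob lam mu n t i\<bar> \<le> 1 + real n * exp (lam / mu)"
proof -
  have th: "lam / mu > 0" using assms by simp
  have "\<bar>bcoef lam mu (n - k) k t * tail_gap (lam / mu) k i\<bar> \<le> exp (lam / mu)" for k
  proof -
    have "\<bar>bcoef lam mu (n - k) k t * tail_gap (lam / mu) k i\<bar> \<le> (lam / mu) ^ (n - k) / fact (n - k) * 1"
      unfolding abs_mult using bcoef_nonneg[OF assms] bcoef_le[OF assms] abs_tail_gap_le[OF th] th
      by (intro mult_mono) auto
    also have "\<dots> \<le> exp (lam / mu)"
      using th by (simp add: power_div_fact_le_exp)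
    finally show ?thesis .
  qed
  then have sum_le: "(\<Sum>k\<in>{1..n}. \<bar>bcoef lam mu (n - k) k t * tail_gap (lam / mu) k i\<bar>) \<le> real n * exp (lam / mu)"
    using sum_bounded_above[of "{1..n}" "\<lambda>k. \<bar>bcoef lam mu (n - k) k t * tail_gap (lam / mu) k i\<bar>"] by simp
  have "\<bar>tail_prob lam mu n t i\<bar>
      \<le> \<bar>pitail (lam / mu) n\<bar> + (\<Sum>k\<in>{1..n}. \<bar>bcoef lam mu (n - k) k t * tail_gap (lam / mu) k i\<bar>)"
    unfolding tail_prob_def by (rule order.trans[OF abs_triangle_ineq add_left_mono[OF sum_abs]])
  also have "\<dots> \<le> 1 + real n * exp (lam / mu)"
    using pitail_nonneg[OF th] pitail_le_1[OF th] sum_le by (intro add_mono) auto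
  finally show ?thesis .
qed

lemma sum_shift_index:
  fixes a e :: "nat \<Rightarrow> real"
  assumes "e 0 = 0"
  shows "(\<Sum>k\<in>{1..n}. a (Suc k) * e k) = (\<Sum>k\<in>{1..Suc n}. a k * e (k - 1))"
  using assms by (induction n) auto

lemma sum_antidiagonal_shift:
  fixes a :: "nat \<Rightarrow> nat \<Rightarrow> real" and e :: "nat \<Rightarrow> real"
  assumes "e 0 = 0"
  shows "(\<Sum>k\<in>{1..n}. (if n - k = 0 then 0 else a (n - k - 1) (Suc k)) * e k)
       = (\<Sum>k\<in>{1..n}. a (n - k) k * e (k - 1))"
proof -
  define b where "b k = (if k \<le> n then a (n - k) k else 0)" for k
  have "(\<Sum>k\<in>{1..n}. (if n - k = 0 then 0 else a (n - k - 1) (Suc k)) * e k) = (\<Sum>k\<in>{1..n}. b (Suc k) * e k)"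
    by (rule sum.cong) (auto simp: b_def Suc_diff_Suc)
  also have "\<dots> = (\<Sum>k\<in>{1..Suc n}. b k * e (k - 1))"
    by (rule sum_shift_index) (rule assms)
  finally show ?thesis by (simp add: b_def)
qed

lemma tail_prob_deriv_eq:
  assumes "lam > 0" "mu > 0"
  shows "(\<Sum>k\<in>{1..n}. (- (lam + mu * real k) * bcoef lam mu (n - k) k t
            + (if n - k = 0 then 0 else lam * bcoef lam mu (n - k - 1) (Suc k) t)) * tail_gap (lam / mu) k i)
       = lam * tail_prob lam mu n t (Suc i) + mu * (\<Sum>k'<i. tail_prob lam mu n t k')
           - (lam + real i * mu) * tail_prob lam mu n t i"
    (is "?lhs = _")
proof -
  let ?th = "lam / mu" and ?b = "\<lambda>r k. bcoef lam mu r k t"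
  have shifted: "(\<Sum>k\<in>{1..n}. (if n - k = 0 then 0 else lam * ?b (n - k - 1) (Suc k)) * tail_gap ?th k i)
      = (\<Sum>k\<in>{1..n}. lam * ?b (n - k) k * tail_gap ?th (k - 1) i)"
    by (rule sum_antidiagonal_shift[where a = "\<lambda>r k. lam * ?b r k"]) simp
  have "?lhs = (\<Sum>k\<in>{1..n}. - (lam + mu * real k) * ?b (n - k) k * tail_gap ?th k i)
     + (\<Sum>k\<in>{1..n}. (if n - k = 0 then 0 else lam * ?b (n - k - 1) (Suc k)) * tail_gap ?th k i)"
    by (simp add: sum.distrib[symmetric] algebra_simps)
  also have "\<dots> = (\<Sum>k\<in>{1..n}. ?b (n - k) k *
        (lam * tail_gap ?th (k - 1) i - (lam + mu * real k) * tail_gap ?th k i))"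
    unfolding shifted by (simp add: sum.distrib[symmetric] algebra_simps)
  also have "\<dots> = (\<Sum>k\<in>{1..n}. ?b (n - k) k *
        (lam * tail_gap ?th k (Suc i) + mu * (\<Sum>k'<i. tail_gap ?th k k') - (lam + real i * mu) * tail_gap ?th k i))"
    by (rule sum.cong) (use generator_tail_gap[OF assms] in auto)
  also have "\<dots> = lam * tail_prob lam mu n t (Suc i) + mu * (\<Sum>k'<i. tail_prob lam mu n t k')
           - (lam + real i * mu) * tail_prob lam mu n t i"
  proof -
    have "(\<Sum>k'<i. \<Sum>k\<in>{1..n}. ?b (n - k) k * tail_gap ?th k k')
        = (\<Sum>k\<in>{1..n}. ?b (n - k) k * (\<Sum>k'<i. tail_gap ?th k k'))"
      by (subst sum.swap) (simp add: sum_distrib_left)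
    moreover have "lam * pitail ?th n + mu * (real i * pitail ?th n) - (lam + real i * mu) * pitail ?th n = 0"
      by (simp add: algebra_simps)
    ultimately show ?thesis
      unfolding tail_prob_def sum.distrib
      by (simp add: algebra_simps sum.distrib sum_distrib_left sum_subtractf sum_distrib_right)
  qed
  finally show ?thesis .
qed

lemma tail_prob_deriv:
  assumes "lam > 0" "mu > 0"
  shows "((\<lambda>t. tail_prob lam mu n t i) has_real_derivative
     lam * tail_prob lam mu n t (Suc i) + mu * (\<Sum>k<i. tail_prob lam mu n t k)
       - (lam + real i * mu) * tail_prob lam mu n t i) (at t)"
proof -
  have "mu \<noteq> 0" using assms by simp
  then show ?thesis
    unfolding tail_prob_deriv_eq[OF assms, symmetric]
    unfolding tail_prob_def by (auto intro!: derivative_eq_intros bcoef_deriv)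
qed

definition ptrans_closed :: "real \<Rightarrow> real \<Rightarrow> real \<Rightarrow> nat \<Rightarrow> nat \<Rightarrow> real" where
  "ptrans_closed lam mu t i j = tail_prob lam mu j t i - tail_prob lam mu (Suc j) t i"

lemma continuous_on_ptrans_closed: "continuous_on A (\<lambda>t. ptrans_closed lam mu t i j)"
  unfolding ptrans_closed_def by (intro continuous_intros continuous_on_tail_prob)

lemma abs_ptrans_closed_le:
  assumes "lam > 0" "mu > 0" "t \<ge> 0"
  shows "\<bar>ptrans_closed lam mu t i j\<bar> \<le> 2 + real (2 * j + 1) * exp (lam / mu)"
  using abs_tail_prob_le[OF assms, of j i] abs_tail_prob_le[OF assms, of "Suc j" i]
  unfolding ptrans_closed_def by (simp add: algebra_simps)

lemma sum_qrate:
  "(\<Sum>k\<in>{..Suc i} - {i}. qrate lam mu i k * u k) = lam * u (Suc i) + mu * (\<Sum>k<i. u k)"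
proof -
  have "{..Suc i} - {i} = insert (Suc i) {..<i}" by auto
  then show ?thesis by (simp add: qrate_def sum_distrib_left)
qed

lemma Piter_Suc_exp_conv:
  "Piter lam mu (Suc n) t i j = (if i = j then exp (- qtot lam mu i * t) else 0)
     + exp_conv (qtot lam mu i) (\<lambda>r. lam * Piter lam mu n r (Suc i) j + mu * (\<Sum>k<i. Piter lam mu n r k j)) t"
  by (simp only: Piter.simps exp_conv_def sum_qrate)

lemma ptrans_closed_integral_eq:
  assumes "lam > 0" "mu > 0" "t \<ge> 0"
  shows "ptrans_closed lam mu t i j = (if i = j then exp (- qtot lam mu i * t) else 0)
     + exp_conv (qtot lam mu i) (\<lambda>r. lam * ptrans_closed lam mu r (Suc i) j + mu * (\<Sum>k<i. ptrans_closed lam mu r k j)) t"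
proof -
  have deriv: "((\<lambda>t. ptrans_closed lam mu t i j) has_real_derivative
      - qtot lam mu i * ptrans_closed lam mu x i j
      + (lam * ptrans_closed lam mu x (Suc i) j + mu * (\<Sum>k<i. ptrans_closed lam mu x k j))) (at x)" for x
    unfolding ptrans_closed_def qtot_def
    by (rule derivative_eq_intros tail_prob_deriv[OF assms(1,2)])+ (simp add: algebra_simps sum_subtractf)
  have "continuous_on {0..t} (\<lambda>r. lam * ptrans_closed lam mu r (Suc i) j + mu * (\<Sum>k<i. ptrans_closed lam mu r k j))"
    by (intro continuous_intros continuous_on_ptrans_closed)
  from variation_of_constants[OF deriv this assms(3)] show ?thesis
    by (simp add: ptrans_closed_def tail_prob_at_0)
qed

section \<open>Convergence of the iterates to the closed form\<close>

lemma Piter_nonneg_continuous: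
  assumes "lam > 0" "mu > 0"
  shows "continuous_on {0..T} (\<lambda>t. Piter lam mu n t i j) \<and> (\<forall>t\<ge>0. 0 \<le> Piter lam mu n t i j)"
proof (induction n arbitrary: i j T)
  case (Suc n)
  define h where "h r = lam * Piter lam mu n r (Suc i) j + mu * (\<Sum>k<i. Piter lam mu n r k j)" for r
  have ch: "continuous_on {0..T'} h" for T'
    unfolding h_def using Suc by (intro continuous_intros) auto
  have "0 \<le> h r" if "r \<ge> 0" for r
    unfolding h_def using Suc assms that by (intro add_nonneg_nonneg mult_nonneg_nonneg sum_nonneg) auto
  then have "0 \<le> exp_conv (qtot lam mu i) h t" if "t \<ge> 0" for t
    by (intro exp_conv_nonneg ch) auto
  moreover have "continuous_on {0..T} (\<lambda>t. (if i = j then exp (- qtot lam mu i * t) else 0) + exp_conv (qtot lam mu i) h t)"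
    by (cases "i = j") (auto intro!: continuous_intros continuous_on_exp_conv ch)
  ultimately show ?case
    unfolding Piter_Suc_exp_conv h_def[symmetric] by simp
qed simp

lemma Piter_mono:
  assumes "lam > 0" "mu > 0"
  shows "t \<ge> 0 \<Longrightarrow> Piter lam mu n t i j \<le> Piter lam mu (Suc n) t i j"
proof (induction n arbitrary: i j t)
  case 0
  then show ?case using Piter_nonneg_continuous[OF assms, of _ "Suc 0"] by simp
next
  case (Suc n)
  define h where "h n r = lam * Piter lam mu n r (Suc i) j + mu * (\<Sum>k<i. Piter lam mu n r k j)" for n r
  have "continuous_on {0..t} (h n')" for n'
    unfolding h_def using Piter_nonneg_continuous[OF assms] by (intro continuous_intros) auto
  moreover have "h n r \<le> h (Suc n) r" if "r \<in> {0..t}" for r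
    unfolding h_def using Suc that assms by (intro add_mono mult_left_mono sum_mono) auto
  ultimately have "exp_conv (qtot lam mu i) (h n) t \<le> exp_conv (qtot lam mu i) (h (Suc n)) t"
    by (intro exp_conv_mono)
  then show ?case
    unfolding Piter_Suc_exp_conv[of _ _ "Suc n"] Piter_Suc_exp_conv[of _ _ n] h_def by simp
qed

definition poisson_density :: "real \<Rightarrow> nat \<Rightarrow> real" where
  "poisson_density a r = exp (- a) * a ^ r / fact r"

definition poisson_tail :: "real \<Rightarrow> nat \<Rightarrow> real" where
  "poisson_tail a k = 1 - (\<Sum>r<k. poisson_density a r)"

lemma poisson_density_nonneg: "a \<ge> 0 \<Longrightarrow> 0 \<le> poisson_density a r"
  unfolding poisson_density_def by simp

lemma poisson_density_deriv:
  "((\<lambda>t. poisson_density (lam * t) r) has_real_derivative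
     - lam * poisson_density (lam * t) r + (if r = 0 then 0 else lam * poisson_density (lam * t) (r - 1))) (at t)"
proof (cases r)
  case (Suc r')
  have "((\<lambda>t. exp (- (lam * t)) * (lam * t) ^ Suc r' / fact (Suc r')) has_real_derivative
     - lam * (exp (- (lam * t)) * (lam * t) ^ Suc r' / fact (Suc r'))
     + lam * (exp (- (lam * t)) * (lam * t) ^ r' / fact r')) (at t)"
    by (rule derivative_eq_intros refl | simp add: field_simps del: of_nat_Suc power_Suc)+
  then show ?thesis unfolding poisson_density_def Suc by simp
qed (auto intro!: derivative_eq_intros simp: poisson_density_def)

lemma poisson_tail_deriv:
  "((\<lambda>t. poisson_tail (lam * t) k) has_real_derivative
     (if k = 0 then 0 else lam * poisson_density (lam * t) (k - 1))) (at t)"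
proof (induction k)
  case (Suc k)
  have "poisson_tail (lam * t) (Suc k) = poisson_tail (lam * t) k - poisson_density (lam * t) k" for t
    unfolding poisson_tail_def by simp
  then show ?case
    by (simp only:) (rule derivative_eq_intros Suc poisson_density_deriv | simp)+
qed (simp add: poisson_tail_def)

lemma poisson_tail_nonneg:
  assumes "a \<ge> 0"
  shows "0 \<le> poisson_tail a k"
proof -
  have "(\<Sum>r<k. a ^ r / fact r) \<le> exp a"
    using sum_le_suminf[OF sums_summable[OF sums_exp_real[of a]], of "{..<k}"]
      sums_unique[OF sums_exp_real[of a]] assms by simp
  then have "exp (- a) * (\<Sum>r<k. a ^ r / fact r) \<le> exp (- a) * exp a"
    by (intro mult_left_mono) auto
  then show ?thesis unfolding poisson_tail_def poisson_density_def
    by (simp add: sum_distrib_left flip: exp_add)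
qed

lemma poisson_tail_antimono:
  assumes "a \<ge> 0" "k \<le> k'"
  shows "poisson_tail a k' \<le> poisson_tail a k"
  unfolding poisson_tail_def
  using assms by (auto intro!: sum_mono2 poisson_density_nonneg)

lemma poisson_tail_tendsto_0: "(\<lambda>k. poisson_tail a k) \<longlonglongrightarrow> 0"
proof -
  have "(\<lambda>k. 1 - exp (- a) * (\<Sum>r<k. a ^ r / fact r)) \<longlonglongrightarrow> 1 - exp (- a) * exp a"
    using sums_exp_real[of a] unfolding sums_def by (intro tendsto_intros)
  then show ?thesis unfolding poisson_tail_def poisson_density_def
    by (simp add: sum_distrib_left flip: exp_add)
qed

lemma poisson_tail_variation_of_constants:
  assumes "t \<ge> 0"
  shows "poisson_tail (lam * t) k = exp (- q * t) * poisson_tail 0 k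
     + exp_conv q (\<lambda>r. lam * poisson_tail (lam * r) (k - 1) + (q - lam) * poisson_tail (lam * r) k) t"
proof -
  have "((\<lambda>t. poisson_tail (lam * t) k) has_real_derivative
     - q * poisson_tail (lam * x) k + (lam * poisson_tail (lam * x) (k - 1) + (q - lam) * poisson_tail (lam * x) k)) (at x)" for x
    using poisson_tail_deriv[of lam k x]
    by (cases k) (auto simp: poisson_tail_def algebra_simps)
  moreover have "continuous_on {0..t} (\<lambda>r. lam * poisson_tail (lam * r) (k - 1) + (q - lam) * poisson_tail (lam * r) k)"
    unfolding poisson_tail_def poisson_density_def by (intro continuous_intros) auto
  ultimately show ?thesis
    using variation_of_constants[where f = "\<lambda>t. poisson_tail (lam * t) k", OF _ _ assms] by simp
qed

lemma abs_jump_combination_le: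
  fixes D :: "nat \<Rightarrow> real"
  assumes "lam \<ge> 0" "mu \<ge> 0" "\<bar>D (Suc i)\<bar> \<le> a" "\<And>k. k < i \<Longrightarrow> \<bar>D k\<bar> \<le> b"
  shows "\<bar>lam * D (Suc i) + mu * (\<Sum>k<i. D k)\<bar> \<le> lam * a + real i * mu * b"
proof -
  have "\<bar>\<Sum>k<i. D k\<bar> \<le> real i * b"
    using order.trans[OF sum_abs sum_bounded_above[of "{..<i}" "\<lambda>k. \<bar>D k\<bar>" b]] assms(4) by auto
  then have "\<bar>lam * D (Suc i)\<bar> \<le> lam * a" "\<bar>mu * (\<Sum>k<i. D k)\<bar> \<le> mu * (real i * b)"
    using assms by (auto simp: abs_mult intro!: mult_left_mono)
  then show ?thesis by (simp add: algebra_simps)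
qed

lemma abs_jump_combination_le_poisson_tail:
  fixes D :: "nat \<Rightarrow> real"
  assumes "lam \<ge> 0" "mu \<ge> 0" "0 \<le> C" "0 \<le> a"
    and D: "\<And>k. \<bar>D k\<bar> \<le> C * poisson_tail a ((n - k) div 2)"
  shows "\<bar>lam * D (Suc i) + mu * (\<Sum>k<i. D k)\<bar>
    \<le> C * (lam * poisson_tail a ((Suc n - i) div 2 - 1) + real i * mu * poisson_tail a ((Suc n - i) div 2))"
proof -
  let ?\<kappa> = "(Suc n - i) div 2"
  have "\<bar>D (Suc i)\<bar> \<le> C * poisson_tail a (?\<kappa> - 1)"
  proof -
    have "C * poisson_tail a ((n - Suc i) div 2) \<le> C * poisson_tail a (?\<kappa> - 1)"
      by (intro mult_left_mono assms(3) poisson_tail_antimono assms(4)) (simp add: div_le_mono le_diff_conv2)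
    then show ?thesis using D[of "Suc i"] by linarith
  qed
  moreover have "\<bar>D k\<bar> \<le> C * poisson_tail a ?\<kappa>" if "k < i" for k
  proof -
    have "C * poisson_tail a ((n - k) div 2) \<le> C * poisson_tail a ?\<kappa>"
      using that by (intro mult_left_mono assms(3) poisson_tail_antimono assms(4) div_le_mono) linarith+
    then show ?thesis using D[of k] by linarith
  qed
  ultimately have "\<bar>lam * D (Suc i) + mu * (\<Sum>k<i. D k)\<bar>
      \<le> lam * (C * poisson_tail a (?\<kappa> - 1)) + real i * mu * (C * poisson_tail a ?\<kappa>)"
    by (rule abs_jump_combination_le[OF assms(1,2)])
  then show ?thesis by (simp add: algebra_simps)
qed

text \<open>A path of \<open>n\<close> jumps from \<open>i\<close> makes at least \<open>(n - i)/2\<close> upward jumps, since it cannot go down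
  more often than \<open>i\<close> plus the number of its upward jumps; the upward jumps form a Poisson process
  of rate \<open>lam\<close>.  This bounds the mass that the \<open>n\<close>-th iterate \<open>Piter\<close> still misses.\<close>

lemma ptrans_closed_Piter_gap:
  assumes "lam > 0" "mu > 0" and bound: "\<And>s i. 0 \<le> s \<Longrightarrow> \<bar>ptrans_closed lam mu s i j\<bar> \<le> C"
  shows "t \<ge> 0 \<Longrightarrow>
    \<bar>ptrans_closed lam mu t i j - Piter lam mu n t i j\<bar> \<le> C * poisson_tail (lam * t) ((n - i) div 2)"
proof (induction n arbitrary: i t)
  case 0
  then show ?case using bound by (simp add: poisson_tail_def)
next
  case (Suc n)
  have C0: "0 \<le> C" using bound[of 0 0] by linarith
  define q where "q = qtot lam mu i"
  define \<kappa> where "\<kappa> = (Suc n - i) div 2"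
  define D where "D r k = ptrans_closed lam mu r k j - Piter lam mu n r k j" for r k
  define hF where "hF r = lam * ptrans_closed lam mu r (Suc i) j + mu * (\<Sum>k<i. ptrans_closed lam mu r k j)" for r
  define hP where "hP r = lam * Piter lam mu n r (Suc i) j + mu * (\<Sum>k<i. Piter lam mu n r k j)" for r
  define hB where "hB r = lam * poisson_tail (lam * r) (\<kappa> - 1) + real i * mu * poisson_tail (lam * r) \<kappa>" for r
  have cont_hF: "continuous_on {0..t} hF"
    unfolding hF_def by (intro continuous_intros continuous_on_ptrans_closed)
  have cont_hP: "continuous_on {0..t} hP"
    unfolding hP_def using Piter_nonneg_continuous[OF assms(1,2)] by (intro continuous_intros) auto
  have cont_hB: "continuous_on {0..t} hB"
    unfolding hB_def poisson_tail_def poisson_density_def by (intro continuous_intros) auto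
  have cont_hD: "continuous_on {0..t} (\<lambda>r. hF r - hP r)"
    by (intro continuous_intros cont_hF cont_hP)
  have hD_le: "\<bar>hF r - hP r\<bar> \<le> C * hB r" if r: "r \<in> {0..t}" for r
  proof -
    have "\<bar>D r k\<bar> \<le> C * poisson_tail (lam * r) ((n - k) div 2)" for k
      using Suc.IH r by (simp add: D_def)
    then have "\<bar>lam * D r (Suc i) + mu * (\<Sum>k<i. D r k)\<bar> \<le> C * hB r"
      unfolding hB_def \<kappa>_def using assms C0 r
      by (intro abs_jump_combination_le_poisson_tail) auto
    moreover have "hF r - hP r = lam * D r (Suc i) + mu * (\<Sum>k<i. D r k)"
      unfolding hF_def hP_def D_def by (simp add: algebra_simps sum_subtractf)
    ultimately show ?thesis by simp
  qed
  have "ptrans_closed lam mu t i j - Piter lam mu (Suc n) t i j = exp_conv q hF t - exp_conv q hP t"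
    unfolding ptrans_closed_integral_eq[OF assms(1,2) Suc.prems, of i j] Piter_Suc_exp_conv q_def hF_def hP_def
    by simp
  also have "\<dots> = exp_conv q (\<lambda>r. hF r - hP r) t"
    by (rule exp_conv_diff[OF cont_hF cont_hP, symmetric])
  finally have "\<bar>ptrans_closed lam mu t i j - Piter lam mu (Suc n) t i j\<bar> \<le> exp_conv q (\<lambda>r. \<bar>hF r - hP r\<bar>) t"
    using abs_exp_conv_le[OF cont_hD] by simp
  also have "\<dots> \<le> exp_conv q (\<lambda>r. C * hB r) t"
    by (rule exp_conv_mono[OF _ _ hD_le]) (intro continuous_intros cont_hD cont_hB)+
  also have "\<dots> = C * (poisson_tail (lam * t) \<kappa> - exp (- q * t) * poisson_tail 0 \<kappa>)"
    using poisson_tail_variation_of_constants[OF Suc.prems, of lam \<kappa> q]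
    by (simp add: exp_conv_cmult hB_def q_def qtot_def)
  also have "\<dots> \<le> C * poisson_tail (lam * t) \<kappa>"
    using C0 poisson_tail_nonneg[of 0 \<kappa>] by (intro mult_left_mono) auto
  finally show ?case unfolding \<kappa>_def .
qed

lemma Piter_tendsto_ptrans_closed:
  assumes "lam > 0" "mu > 0" "t \<ge> 0"
  shows "(\<lambda>n. Piter lam mu n t i j) \<longlonglongrightarrow> ptrans_closed lam mu t i j"
proof -
  define C where "C = 2 + real (2 * j + 1) * exp (lam / mu)"
  have "\<exists>N. \<forall>n\<ge>N. Z \<le> (n - i) div 2" for Z
    by (rule exI[of _ "2 * Z + i"]) auto
  then have "filterlim (\<lambda>n. (n - i) div 2) at_top sequentially"
    unfolding filterlim_at_top eventually_sequentially by blast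
  then have "(\<lambda>n. C * poisson_tail (lam * t) ((n - i) div 2)) \<longlonglongrightarrow> C * 0"
    by (intro tendsto_intros filterlim_compose[OF poisson_tail_tendsto_0])
  then have lim: "(\<lambda>n. C * poisson_tail (lam * t) ((n - i) div 2)) \<longlonglongrightarrow> 0"
    by simp
  have "\<forall>n. norm (ptrans_closed lam mu t i j - Piter lam mu n t i j) \<le> C * poisson_tail (lam * t) ((n - i) div 2)"
    using ptrans_closed_Piter_gap[OF assms(1,2) abs_ptrans_closed_le[OF assms(1,2)] assms(3)]
    unfolding C_def real_norm_def by blast
  then have "(\<lambda>n. ptrans_closed lam mu t i j - Piter lam mu n t i j) \<longlonglongrightarrow> 0"
    by (rule Lim_null_comparison[OF always_eventually lim])
  then have "(\<lambda>n. ptrans_closed lam mu t i j - (ptrans_closed lam mu t i j - Piter lam mu n t i j))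
      \<longlonglongrightarrow> ptrans_closed lam mu t i j - 0"
    by (intro tendsto_intros)
  then show ?thesis by simp
qed

lemma ptrans_eq_ptrans_closed:
  assumes "lam > 0" "mu > 0" "t \<ge> 0"
  shows "ptrans lam mu t i j = ptrans_closed lam mu t i j"
proof -
  have inc: "incseq (\<lambda>n. Piter lam mu n t i j)"
    by (rule incseq_SucI) (use Piter_mono[OF assms(1,2) assms(3)] in auto)
  then have "Piter lam mu n t i j \<le> ptrans_closed lam mu t i j" for n
    by (rule incseq_le[OF _ Piter_tendsto_ptrans_closed[OF assms]])
  then have "bdd_above (range (\<lambda>n. Piter lam mu n t i j))"
    by (auto intro!: bdd_aboveI)
  from LIMSEQ_incseq_SUP[OF this inc] have "(\<lambda>n. Piter lam mu n t i j) \<longlonglongrightarrow> ptrans lam mu t i j"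
    unfolding ptrans_def .
  then show ?thesis using Piter_tendsto_ptrans_closed[OF assms] LIMSEQ_unique by blast
qed

lemma ptrans_closed_nonneg:
  assumes "lam > 0" "mu > 0" "t \<ge> 0"
  shows "0 \<le> ptrans_closed lam mu t i j"
  using LIMSEQ_le_const[OF Piter_tendsto_ptrans_closed[OF assms]] Piter_nonneg_continuous[OF assms(1,2)] assms(3)
  by blast

section \<open>Rearranging series\<close>

lemma summable_on_infsum_of_summable_abs:
  fixes g :: "nat \<Rightarrow> real"
  assumes "summable (\<lambda>n. \<bar>g n\<bar>)"
  shows "g summable_on UNIV" and "infsum g UNIV = suminf g"
proof -
  have norm: "summable (\<lambda>n. norm (g n))" using assms by simp
  have "(g has_sum suminf g) UNIV"
    by (rule norm_summable_imp_has_sum[OF norm summable_sums[OF summable_norm_cancel[OF norm]]])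
  then show "g summable_on UNIV" "infsum g UNIV = suminf g"
    by (auto simp: infsumI summable_on_def)
qed

lemma sums_diagonal_of_summable_on:
  fixes F :: "nat \<times> nat \<Rightarrow> real"
  assumes "F summable_on UNIV \<times> UNIV"
  shows "(\<lambda>n. \<Sum>k\<le>n. F (k, n - k)) sums infsum F (UNIV \<times> UNIV)"
proof -
  have bij: "bij_betw (\<lambda>(n, k). (k, n - k)) (Sigma UNIV (\<lambda>n. {..n})) (UNIV \<times> (UNIV :: nat set))"
    by (rule bij_betw_byWitness[where f' = "\<lambda>(k, r). (k + r, k)"]) auto
  have "(\<lambda>x. F ((\<lambda>(n, k). (k, n - k)) x)) summable_on Sigma UNIV (\<lambda>n. {..n})"
    using summable_on_reindex_bij_betw[OF bij] assms by blast
  then have s: "(\<lambda>(n, k). F (k, n - k)) summable_on Sigma UNIV (\<lambda>n. {..n})"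
    by (simp add: case_prod_unfold)
  have "infsum (\<lambda>(n, k). F (k, n - k)) (Sigma UNIV (\<lambda>n. {..n})) = infsum F (UNIV \<times> UNIV)"
    using infsum_reindex_bij_betw[OF bij, of F] by (simp add: case_prod_unfold)
  moreover have "infsum (\<lambda>n. \<Sum>k\<le>n. F (k, n - k)) UNIV = infsum (\<lambda>(n, k). F (k, n - k)) (Sigma UNIV (\<lambda>n. {..n}))"
    using infsum_Sigma'_banach[OF s] by simp
  moreover have "(\<lambda>n. \<Sum>k\<le>n. F (k, n - k)) sums infsum (\<lambda>n. \<Sum>k\<le>n. F (k, n - k)) UNIV"
    using has_sum_imp_sums[OF has_sum_infsum] summable_on_Sigma_banach[OF s] by simp
  ultimately show ?thesis by simp
qed

lemma sums_diagonal:
  fixes f :: "nat \<Rightarrow> nat \<Rightarrow> real"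
  assumes rows: "\<And>k. summable (\<lambda>r. \<bar>f k r\<bar>)" and total: "summable (\<lambda>k. \<Sum>r. \<bar>f k r\<bar>)"
  shows "(\<lambda>n. \<Sum>k\<le>n. f k (n - k)) sums (\<Sum>k. \<Sum>r. f k r)"
    and "summable (\<lambda>n. \<Sum>k\<le>n. \<bar>f k (n - k)\<bar>)"
proof -
  define F where "F = (\<lambda>(k, r). f k r)"
  have row_abs: "(\<lambda>r. norm (f k r)) summable_on UNIV" and row_abs_sum: "infsum (\<lambda>r. \<bar>f k r\<bar>) UNIV = (\<Sum>r. \<bar>f k r\<bar>)" for k
    using summable_on_infsum_of_summable_abs[of "\<lambda>r. \<bar>f k r\<bar>"] rows by simp_all
  have "(\<lambda>k. norm (\<Sum>r. \<bar>f k r\<bar>)) summable_on UNIV"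
    using summable_nonneg_imp_summable_on[of "\<lambda>k. norm (\<Sum>r. \<bar>f k r\<bar>)"] total suminf_nonneg[OF rows] by simp
  then have "(\<lambda>x. norm (\<Sum>\<^sub>\<infinity>y\<in>UNIV. norm (F (x, y)))) summable_on UNIV"
    by (simp add: F_def row_abs_sum)
  moreover have "\<forall>k\<in>UNIV. (\<lambda>y. norm (F (k, y))) summable_on UNIV"
    using row_abs by (simp add: F_def)
  ultimately have "(\<lambda>x. norm (F x)) summable_on UNIV \<times> UNIV"
    using Infinite_Sum.abs_summable_on_Sigma_iff[where f = F and A = UNIV and B = "\<lambda>_. UNIV"] by blast
  then have sF: "F summable_on UNIV \<times> UNIV" and sFa: "(\<lambda>x. \<bar>F x\<bar>) summable_on UNIV \<times> UNIV"
    by (auto intro: abs_summable_summable)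
  have "infsum F (UNIV \<times> UNIV) = infsum (\<lambda>k. \<Sum>r. f k r) UNIV"
    using infsum_Sigma'_banach[of f UNIV "\<lambda>_. UNIV"] sF summable_on_infsum_of_summable_abs(2)[OF rows]
    by (simp add: F_def)
  also have "\<dots> = (\<Sum>k. \<Sum>r. f k r)"
    by (rule summable_on_infsum_of_summable_abs(2), rule summable_comparison_test'[OF total])
       (auto intro!: summable_rabs[OF rows])
  finally have "infsum F (UNIV \<times> UNIV) = (\<Sum>k. \<Sum>r. f k r)" .
  then show "(\<lambda>n. \<Sum>k\<le>n. f k (n - k)) sums (\<Sum>k. \<Sum>r. f k r)"
    using sums_diagonal_of_summable_on[OF sF] by (simp add: F_def)
  show "summable (\<lambda>n. \<Sum>k\<le>n. \<bar>f k (n - k)\<bar>)"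
    using sums_diagonal_of_summable_on[OF sFa] by (simp add: F_def sums_summable)
qed

lemma sum_summation_by_parts_tail:
  fixes A w :: "nat \<Rightarrow> real"
  shows "(\<Sum>j<N. (\<Sum>n<Suc j. w n) * (A j - A (Suc j))) = (\<Sum>n<N. w n * (A n - A N))"
proof (induction N)
  case (Suc N)
  have "(\<Sum>n<N. w n * (A n - A (Suc N))) = (\<Sum>n<N. w n * (A n - A N) + w n * (A N - A (Suc N)))"
    by (rule sum.cong) (auto simp: algebra_simps)
  also have "\<dots> = (\<Sum>n<N. w n * (A n - A N)) + (\<Sum>n<N. w n) * (A N - A (Suc N))"
    by (simp only: sum.distrib sum_distrib_right)
  finally show ?case using Suc by (simp add: algebra_simps)
qed simp

context
  fixes A w :: "nat \<Rightarrow> real"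
  assumes A_dec: "decseq A" and A_lim: "A \<longlonglongrightarrow> 0" and w_nonneg: "\<And>n. 0 \<le> w n"
begin

private abbreviation (input) "incr j \<equiv> (\<Sum>n<Suc j. w n) * (A j - A (Suc j))"

private lemma A_nonneg: "0 \<le> A n"
  using decseq_ge[OF A_dec A_lim] .

private lemma incr_nonneg: "0 \<le> incr j"
  using A_dec w_nonneg by (intro mult_nonneg_nonneg sum_nonneg) (auto simp: decseq_Suc_iff)

private lemma partial_le: "(\<Sum>j<N. incr j) \<le> (\<Sum>n<N. w n * A n)"
  unfolding sum_summation_by_parts_tail
  using w_nonneg A_nonneg by (intro sum_mono mult_left_mono) auto

private lemma partial_le_suminf:
  assumes "summable (\<lambda>n. w n * A n)"
  shows "(\<Sum>j<N. incr j) \<le> (\<Sum>n. w n * A n)"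
  using partial_le sum_le_suminf[OF assms, of "{..<N}"] w_nonneg A_nonneg by (force intro: order.trans)

private lemma partial_ge:
  assumes "summable (\<lambda>j. incr j)"
  shows "(\<Sum>n<M. w n * A n) \<le> (\<Sum>j. incr j)"
proof -
  have "(\<Sum>n<M. w n * (A n - A N)) \<le> (\<Sum>j. incr j)" if "M \<le> N" for N
  proof -
    have "(\<Sum>n<M. w n * (A n - A N)) \<le> (\<Sum>n<N. w n * (A n - A N))"
      using that w_nonneg A_dec by (intro sum_mono2) (auto simp: decseq_def)
    also have "\<dots> \<le> (\<Sum>j. incr j)"
      unfolding sum_summation_by_parts_tail[symmetric]
      using incr_nonneg by (intro sum_le_suminf[OF assms]) auto
    finally show ?thesis .
  qed
  then have "eventually (\<lambda>N. (\<Sum>n<M. w n * (A n - A N)) \<le> (\<Sum>j. incr j)) sequentially"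
    unfolding eventually_sequentially by blast
  moreover have "(\<lambda>N. \<Sum>n<M. w n * (A n - A N)) \<longlonglongrightarrow> (\<Sum>n<M. w n * (A n - 0))"
    by (intro tendsto_intros A_lim)
  ultimately show ?thesis
    using tendsto_le[OF trivial_limit_sequentially tendsto_const] by fastforce
qed

lemma sums_summation_by_parts_iff:
  "(\<lambda>j. (\<Sum>n<Suc j. w n) * (A j - A (Suc j))) sums s \<longleftrightarrow> (\<lambda>n. w n * A n) sums s"
proof
  assume "(\<lambda>j. incr j) sums s"
  then have s: "summable (\<lambda>j. incr j)" and "s = (\<Sum>j. incr j)" by (auto simp: sums_iff)
  moreover have sA: "summable (\<lambda>n. w n * A n)"
    using w_nonneg A_nonneg partial_ge[OF s] by (intro summableI_nonneg_bounded) auto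
  moreover have "(\<Sum>n. w n * A n) = (\<Sum>j. incr j)"
    by (intro antisym suminf_le_const[OF sA partial_ge[OF s]] suminf_le_const[OF s partial_le_suminf[OF sA]])
  ultimately show "(\<lambda>n. w n * A n) sums s" by (simp add: sums_iff)
next
  assume "(\<lambda>n. w n * A n) sums s"
  then have sA: "summable (\<lambda>n. w n * A n)" and "s = (\<Sum>n. w n * A n)" by (auto simp: sums_iff)
  have s: "summable (\<lambda>j. incr j)"
    using incr_nonneg partial_le_suminf[OF sA] by (intro summableI_nonneg_bounded) auto
  then have "(\<Sum>j. incr j) = (\<Sum>n. w n * A n)"
    by (intro antisym suminf_le_const[OF s partial_le_suminf[OF sA]] suminf_le_const[OF sA partial_ge[OF s]])
  then show "(\<lambda>j. incr j) sums s"
    using s \<open>s = _\<close> by (simp add: sums_iff)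
qed

end

section \<open>Power increments and Poisson weights\<close>

definition power_incr :: "nat \<Rightarrow> nat \<Rightarrow> real" where
  "power_incr m n = real n ^ m - real (n - 1) ^ m"

lemma power_incr_0 [simp]: "power_incr m 0 = 0"
  by (simp add: power_incr_def)

lemma sum_power_incr: "m \<ge> 1 \<Longrightarrow> (\<Sum>n<Suc j. power_incr m n) = real j ^ m"
  by (induction j) (auto simp: power_incr_def)

lemma power_incr_Suc: "power_incr m (Suc n) = (\<Sum>i<m. real n ^ (m - Suc i) * real (Suc n) ^ i)"
  using power_diff_sumr2[of "real (Suc n)" m "real n"] by (simp add: power_incr_def)

lemma power_incr_nonneg: "0 \<le> power_incr m n"
  unfolding power_incr_def by (auto intro!: power_mono)

lemma power_incr_le_power: "power_incr m n \<le> real n ^ m"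
  unfolding power_incr_def by simp

lemma power_incr_mono: "power_incr m n \<le> power_incr m (Suc n)"
proof (cases n)
  case 0
  then show ?thesis using power_incr_nonneg[of m 1] by simp
next
  case (Suc n')
  show ?thesis unfolding Suc power_incr_Suc[of m n'] power_incr_Suc[of m "Suc n'"]
    by (intro sum_mono mult_mono power_mono) auto
qed

lemma power_incr_le: "power_incr m n \<le> real m * real n ^ (m - 1)"
proof (cases n)
  case (Suc n')
  have "real n' ^ (m - Suc i) * real n ^ i \<le> real n ^ (m - 1)" if "i < m" for i
  proof -
    have "real n' ^ (m - Suc i) * real n ^ i \<le> real n ^ (m - Suc i) * real n ^ i"
      using Suc by (intro mult_right_mono power_mono) auto
    also have "\<dots> = real n ^ (m - 1)"
      using that by (simp flip: power_add)
    finally show ?thesis .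
  qed
  then have "power_incr m n \<le> (\<Sum>i<m. real n ^ (m - 1))"
    unfolding Suc power_incr_Suc by (intro sum_mono) (auto simp: Suc)
  then show ?thesis by simp
qed simp

lemma power_incr_ge:
  assumes "n \<ge> 1" "m \<ge> 1"
  shows "real n ^ (m - 1) \<le> power_incr m n"
proof -
  obtain n' where n: "n = Suc n'" using assms by (cases n) auto
  have "real n' ^ (m - Suc (m - 1)) * real (Suc n') ^ (m - 1)
      \<le> (\<Sum>i<m. real n' ^ (m - Suc i) * real (Suc n') ^ i)"
    by (rule member_le_sum[of "m - 1"]) (use assms in auto)
  then show ?thesis unfolding n power_incr_Suc using assms by simp
qed

lemma summable_power_poisson:
  assumes "0 \<le> c" "0 \<le> (x::real)"
  shows "summable (\<lambda>r. (c + real r) ^ a * (x ^ r / fact r))"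
proof (rule summable_comparison_test')
  show "summable (\<lambda>r. fact a * exp c * ((exp 1 * x) ^ r / fact r))"
    by (intro summable_mult sums_summable[OF sums_exp_real])
  fix r
  have "(c + real r) ^ a \<le> fact a * exp (c + real r)"
    using power_div_fact_le_exp[of "c + real r" a] assms by (simp add: field_simps)
  also have "\<dots> = fact a * exp c * exp 1 ^ r"
    by (simp add: exp_add exp_of_nat_mult[symmetric] mult_ac)
  finally have "(c + real r) ^ a * (x ^ r / fact r) \<le> fact a * exp c * exp 1 ^ r * (x ^ r / fact r)"
    using assms by (intro mult_right_mono) auto
  then show "norm ((c + real r) ^ a * (x ^ r / fact r)) \<le> fact a * exp c * ((exp 1 * x) ^ r / fact r)"
    using assms by (simp add: power_mult_distrib mult_ac)
qed

lemma summable_power_incr_poisson: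
  assumes "0 \<le> (x::real)"
  shows "summable (\<lambda>r. power_incr m (k + r) * (x ^ r / fact r))"
proof (rule summable_comparison_test')
  show "summable (\<lambda>r. (real k + real r) ^ m * (x ^ r / fact r))"
    using summable_power_poisson[of "real k" x m] assms by simp
  show "norm (power_incr m (k + r) * (x ^ r / fact r)) \<le> (real k + real r) ^ m * (x ^ r / fact r)" for r
    using power_incr_le_power[of m "k + r"] power_incr_nonneg[of m "k + r"] assms
    by (simp add: abs_mult mult_right_mono divide_right_mono)
qed

text \<open>The proof convolves with \<open>Poisson(e)\<close>.\<close>

lemma poisson_series_mono:
  fixes f :: "nat \<Rightarrow> real"
  assumes f_nonneg: "\<And>n. 0 \<le> f n" and f_mono: "\<And>n. f n \<le> f (Suc n)"
    and "0 \<le> L" "0 \<le> e"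
    and summable: "summable (\<lambda>r. f r * ((L + e) ^ r / fact r))"
  shows "summable (\<lambda>r. f r * (L ^ r / fact r))"
    and "(\<Sum>r. f r * (L ^ r / fact r)) * exp e \<le> (\<Sum>r. f r * ((L + e) ^ r / fact r))"
proof -
  have sa: "summable (\<lambda>r. norm (f r * (L ^ r / fact r)))"
  proof (rule summable_comparison_test'[OF summable])
    show "norm (norm (f r * (L ^ r / fact r))) \<le> f r * ((L + e) ^ r / fact r)" for r
      using f_nonneg assms by (auto intro!: mult_left_mono divide_right_mono power_mono simp: abs_mult)
  qed
  then show "summable (\<lambda>r. f r * (L ^ r / fact r))" by (rule summable_norm_cancel)
  have "summable (\<lambda>r. norm (e ^ r / fact r))"
    using sums_summable[OF sums_exp_real[of e]] assms by simp
  from Cauchy_product_sums[OF sa this]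
  have cp: "(\<lambda>k. \<Sum>i\<le>k. f i * (L ^ i / fact i) * (e ^ (k - i) / fact (k - i))) sums
      ((\<Sum>r. f r * (L ^ r / fact r)) * exp e)"
    using sums_unique[OF sums_exp_real[of e]] by simp
  have "(\<Sum>i\<le>k. f i * (L ^ i / fact i) * (e ^ (k - i) / fact (k - i))) \<le> f k * ((L + e) ^ k / fact k)" for k
  proof -
    have "(\<Sum>i\<le>k. f i * (L ^ i / fact i) * (e ^ (k - i) / fact (k - i)))
        \<le> (\<Sum>i\<le>k. f k * (L ^ i / fact i * (e ^ (k - i) / fact (k - i))))"
      unfolding mult.assoc using assms lift_Suc_mono_le[of f, OF f_mono]
      by (intro sum_mono mult_right_mono) auto
    also have "\<dots> = f k * ((L + e) ^ k / fact k)"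
      using exp_series_add_commuting[of L e k]
      by (simp add: sum_distrib_left divide_inverse_commute mult.commute)
    finally show ?thesis .
  qed
  then show "(\<Sum>r. f r * (L ^ r / fact r)) * exp e \<le> (\<Sum>r. f r * ((L + e) ^ r / fact r))"
    using sums_le[OF _ cp summable_sums[OF summable]] by blast
qed

lemma hfun_eq: "hfun th m x = (\<Sum>\<rho>. poisson_density th \<rho> * (x + real \<rho>) ^ (m - 1))"
  unfolding hfun_def poisson_density_def by simp

lemma summable_hfun:
  assumes "th \<ge> 0" "x \<ge> 0"
  shows "summable (\<lambda>\<rho>. poisson_density th \<rho> * (x + real \<rho>) ^ (m - 1))"
proof -
  have "summable (\<lambda>r. exp (- th) * ((x + real r) ^ (m - 1) * (th ^ r / fact r)))"
    using summable_power_poisson[of x th "m - 1"] assms by (intro summable_mult) auto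
  then show ?thesis by (simp add: poisson_density_def mult_ac)
qed

lemma hfun_nonneg:
  assumes "th \<ge> 0" "x \<ge> 0"
  shows "0 \<le> hfun th m x"
  unfolding hfun_eq using assms
  by (intro suminf_nonneg summable_hfun) (auto intro!: mult_nonneg_nonneg poisson_density_nonneg)

lemma borel_measurable_hfun [measurable]: "hfun th m \<in> borel_measurable borel"
  unfolding hfun_eq[abs_def] by measurable

definition poisson_incr :: "real \<Rightarrow> nat \<Rightarrow> nat \<Rightarrow> real" where
  "poisson_incr th m k = (\<Sum>\<rho>. poisson_density th \<rho> * power_incr m (k + \<rho>))"

lemma summable_poisson_incr:
  assumes "th \<ge> 0"
  shows "summable (\<lambda>\<rho>. poisson_density th \<rho> * power_incr m (k + \<rho>))"
proof -
  have "summable (\<lambda>r. exp (- th) * (power_incr m (k + r) * (th ^ r / fact r)))"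
    using summable_power_incr_poisson[of th m k] assms by (intro summable_mult) auto
  then show ?thesis by (simp add: poisson_density_def mult_ac)
qed

lemma poisson_incr_nonneg: "th \<ge> 0 \<Longrightarrow> 0 \<le> poisson_incr th m k"
  unfolding poisson_incr_def
  by (intro suminf_nonneg summable_poisson_incr mult_nonneg_nonneg poisson_density_nonneg power_incr_nonneg)

lemma shifted_power_has_integral:
  assumes "m \<ge> 1"
  shows "((\<lambda>x. (x + real \<rho>) ^ (m - 1)) has_integral power_incr m (n + 1 + \<rho>) / real m) {real n..<real n + 1}"
proof -
  have "((\<lambda>x. (x + real \<rho>) ^ m / real m) has_real_derivative
      (real m * (x + real \<rho>) ^ (m - 1) * 1) / real m) (at x)" for x
    using assms by (auto intro!: derivative_eq_intros simp: field_simps)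
  then have "((\<lambda>x. (x + real \<rho>) ^ m / real m) has_real_derivative (x + real \<rho>) ^ (m - 1)) (at x)" for x
    using assms by simp
  then have "((\<lambda>x. (x + real \<rho>) ^ (m - 1)) has_integral
      ((real n + 1 + real \<rho>) ^ m / real m - (real n + real \<rho>) ^ m / real m)) {real n..real n + 1}"
    by (intro fundamental_theorem_of_calculus)
       (auto simp: has_real_derivative_iff_has_vector_derivative has_vector_derivative_at_within)
  moreover have "(real n + 1 + real \<rho>) ^ m / real m - (real n + real \<rho>) ^ m / real m
      = power_incr m (n + 1 + \<rho>) / real m"
    unfolding power_incr_def by (simp add: diff_divide_distrib add_ac)
  ultimately have "((\<lambda>x. (x + real \<rho>) ^ (m - 1)) has_integral power_incr m (n + 1 + \<rho>) / real m)
      {real n..real n + 1}"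
    by simp
  then show ?thesis
  proof (subst has_integral_spike_set_eq[symmetric])
    show "negligible {x \<in> {real n..real n + 1} - {real n..<real n + 1}. (x + real \<rho>) ^ (m - 1) \<noteq> 0}"
      by (rule negligible_subset[OF negligible_sing[of "real n + 1"]]) auto
    show "negligible {x \<in> {real n..<real n + 1} - {real n..real n + 1}. (x + real \<rho>) ^ (m - 1) \<noteq> 0}"
      by (rule negligible_subset[OF negligible_empty]) auto
  qed
qed

lemma nn_integral_hfun_unit_interval:
  assumes "th \<ge> 0" "m \<ge> 1"
  shows "(\<integral>\<^sup>+ x. ennreal (hfun th m x * indicator {real n..<real n + 1} x) \<partial>lborel)
       = ennreal (poisson_incr th m (Suc n) / real m)"
proof -
  let ?I = "indicator {real n..<real n + 1} :: real \<Rightarrow> real"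
  let ?J = "indicator {real n..<real n + 1} :: real \<Rightarrow> ennreal"
  have "ennreal (hfun th m x * ?I x)
      = (\<Sum>\<rho>. ennreal (poisson_density th \<rho>) * (ennreal ((x + real \<rho>) ^ (m - 1)) * ?J x))" for x
  proof (cases "x \<in> {real n..<real n + 1}")
    case True
    then have x0: "x \<ge> 0" by auto
    have "ennreal (hfun th m x * ?I x) = ennreal (\<Sum>\<rho>. poisson_density th \<rho> * (x + real \<rho>) ^ (m - 1))"
      using True by (simp add: hfun_eq)
    also have "\<dots> = (\<Sum>\<rho>. ennreal (poisson_density th \<rho> * (x + real \<rho>) ^ (m - 1)))"
      using summable_hfun[OF assms(1) x0] assms x0
      by (intro suminf_ennreal2[symmetric]) (auto intro!: mult_nonneg_nonneg poisson_density_nonneg)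
    also have "\<dots> = (\<Sum>\<rho>. ennreal (poisson_density th \<rho>) * (ennreal ((x + real \<rho>) ^ (m - 1)) * ?J x))"
      using True assms x0 by (intro suminf_cong) (simp add: ennreal_mult poisson_density_nonneg)
    finally show ?thesis .
  qed simp
  then have "(\<integral>\<^sup>+ x. ennreal (hfun th m x * ?I x) \<partial>lborel)
      = (\<Sum>\<rho>. ennreal (poisson_density th \<rho>) * (\<integral>\<^sup>+ x. ennreal ((x + real \<rho>) ^ (m - 1)) * ?J x \<partial>lborel))"
    by (simp add: nn_integral_suminf nn_integral_cmult)
  also have "\<dots> = (\<Sum>\<rho>. ennreal (poisson_density th \<rho> * power_incr m (Suc n + \<rho>) / real m))"
  proof (intro suminf_cong)
    fix \<rho>
    have "(\<integral>\<^sup>+ x. ennreal ((x + real \<rho>) ^ (m - 1)) * ?J x \<partial>lborel) = ennreal (power_incr m (n + 1 + \<rho>) / real m)"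
      by (rule nn_integral_has_integral_lebesgue'[OF _ shifted_power_has_integral[OF assms(2)]]) auto
    then show "ennreal (poisson_density th \<rho>) * (\<integral>\<^sup>+ x. ennreal ((x + real \<rho>) ^ (m - 1)) * ?J x \<partial>lborel)
        = ennreal (poisson_density th \<rho> * power_incr m (Suc n + \<rho>) / real m)"
      using assms by (simp add: ennreal_mult[symmetric] poisson_density_nonneg power_incr_nonneg)
  qed
  also have "\<dots> = ennreal (poisson_incr th m (Suc n) / real m)"
    unfolding poisson_incr_def
    using assms summable_poisson_incr[OF assms(1), of m "Suc n"]
    by (simp add: suminf_ennreal2 summable_divide suminf_divide poisson_density_nonneg power_incr_nonneg)
  finally show ?thesis .
qed

lemma indicator_unit_interval_floor:
  assumes "x \<ge> 0"
  shows "indicator {real n..<real n + 1} x = (if n = nat \<lfloor>x\<rfloor> then 1 else (0::real))"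
proof -
  have "x \<in> {real n..<real n + 1} \<longleftrightarrow> n = nat \<lfloor>x\<rfloor>"
  proof
    assume "x \<in> {real n..<real n + 1}"
    then have "\<lfloor>x\<rfloor> = int n" by (intro floor_unique) auto
    then show "n = nat \<lfloor>x\<rfloor>" by simp
  next
    assume "n = nat \<lfloor>x\<rfloor>"
    then have "real n = of_int \<lfloor>x\<rfloor>" using assms by simp
    then show "x \<in> {real n..<real n + 1}" by (simp add: of_int_floor_le)
  qed
  then show ?thesis by (simp add: indicator_def)
qed

context
  fixes th :: real and m :: nat and c :: "nat \<Rightarrow> real" and F :: "real \<Rightarrow> real"
  assumes th: "th \<ge> 0" and m: "m \<ge> 1" and c_nonneg: "\<And>n. 0 \<le> c n"
    and F: "\<And>x. 0 \<le> x \<Longrightarrow> F x = c (nat \<lfloor>x\<rfloor>)"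
begin

private abbreviation (input) "g n x \<equiv> c n * (hfun th m x * indicator {real n..<real n + 1} x)"

private lemma hfun_indicator_nonneg: "0 \<le> hfun th m x * indicator {real n..<real n + 1} x"
  unfolding indicator_def using hfun_nonneg[OF th] by auto

private lemma sums_hfun_step: "(\<lambda>n. g n x) sums (indicator {0..} x * (hfun th m x * F x))"
proof (cases "x \<ge> 0")
  case True
  have "(\<lambda>n. g n x) = (\<lambda>n. if n = nat \<lfloor>x\<rfloor> then c n * hfun th m x else 0)"
    unfolding indicator_unit_interval_floor[OF True] by auto
  then show ?thesis
    using sums_single[of "nat \<lfloor>x\<rfloor>" "\<lambda>n. c n * hfun th m x"] True F[OF True] by (simp add: mult.commute)
qed (simp add: indicator_def)

private lemma nn_integral_hfun_step:
  assumes "summable (\<lambda>n. c n * poisson_incr th m (Suc n))"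
  shows "(\<integral>\<^sup>+ x. ennreal (indicator {0..} x * (hfun th m x * F x)) \<partial>lborel)
      = ennreal (\<Sum>n. c n * poisson_incr th m (Suc n) / real m)"
proof -
  have "(\<integral>\<^sup>+ x. ennreal (indicator {0..} x * (hfun th m x * F x)) \<partial>lborel) = (\<integral>\<^sup>+ x. (\<Sum>n. ennreal (g n x)) \<partial>lborel)"
    using sums_hfun_step c_nonneg hfun_indicator_nonneg
    by (intro nn_integral_cong) (simp add: sums_iff suminf_ennreal2)
  also have "\<dots> = (\<Sum>n. \<integral>\<^sup>+ x. ennreal (g n x) \<partial>lborel)"
    by (intro nn_integral_suminf) measurable
  also have "\<dots> = (\<Sum>n. ennreal (c n * poisson_incr th m (Suc n) / real m))"
  proof (intro suminf_cong)
    fix n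
    have "(\<integral>\<^sup>+ x. ennreal (g n x) \<partial>lborel)
        = ennreal (c n) * (\<integral>\<^sup>+ x. ennreal (hfun th m x * indicator {real n..<real n + 1} x) \<partial>lborel)"
      using c_nonneg hfun_indicator_nonneg
      by (subst nn_integral_cmult[symmetric]) (auto simp: ennreal_mult intro!: nn_integral_cong)
    then show "(\<integral>\<^sup>+ x. ennreal (g n x) \<partial>lborel) = ennreal (c n * poisson_incr th m (Suc n) / real m)"
      using c_nonneg poisson_incr_nonneg[OF th, of m "Suc n"] m
      by (simp add: nn_integral_hfun_unit_interval[OF th m] ennreal_mult[symmetric] times_divide_eq_right)
  qed
  also have "\<dots> = ennreal (\<Sum>n. c n * poisson_incr th m (Suc n) / real m)"
    using assms c_nonneg poisson_incr_nonneg[OF th]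
    by (intro suminf_ennreal2) (auto simp: summable_divide)
  finally show ?thesis .
qed

lemma set_integral_hfun_step:
  assumes "summable (\<lambda>n. c n * poisson_incr th m (Suc n))"
  shows "(LBINT x:{0..}. hfun th m x * F x) * real m = (\<Sum>n. c n * poisson_incr th m (Suc n))"
proof -
  have "(\<lambda>x. \<Sum>n. g n x) \<in> borel_measurable lborel"
    by measurable
  moreover have "(\<lambda>x. \<Sum>n. g n x) = (\<lambda>x. indicator {0..} x * (hfun th m x * F x))"
    using sums_hfun_step by (auto simp: sums_iff)
  ultimately have meas: "(\<lambda>x. indicator {0..} x * (hfun th m x * F x)) \<in> borel_measurable lborel"
    by simp
  have "0 \<le> indicator {0..} x * (hfun th m x * F x)" for x
    using sums_le[OF _ sums_zero sums_hfun_step] c_nonneg hfun_indicator_nonneg by auto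
  then have "(LBINT x:{0..}. hfun th m x * F x) = enn2real (ennreal (\<Sum>n. c n * poisson_incr th m (Suc n) / real m))"
    unfolding set_lebesgue_integral_def nn_integral_hfun_step[OF assms, symmetric]
    by (simp add: integral_eq_nn_integral[OF meas])
  also have "\<dots> = (\<Sum>n. c n * poisson_incr th m (Suc n)) / real m"
    using assms c_nonneg poisson_incr_nonneg[OF th]
    by (simp add: suminf_divide suminf_nonneg)
  finally show ?thesis using m by simp
qed

end

section \<open>Moments of the chain\<close>

definition tail_mass :: "(nat \<Rightarrow> real) \<Rightarrow> nat \<Rightarrow> real" where
  "tail_mass p k = 1 - (\<Sum>i<k. p i)"

lemma tail_mass_0 [simp]: "tail_mass p 0 = 1"
  by (simp add: tail_mass_def)

lemma tail_mass_Suc: "tail_mass p (Suc k) = tail_mass p k - p k"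
  by (simp add: tail_mass_def)

lemma sums_tail_mass:
  assumes "p sums 1"
  shows "(\<lambda>i. if k \<le> i then p i else 0) sums tail_mass p k"
proof -
  have "(\<lambda>i. p i - (if i \<in> {..<k} then p i else 0)) sums (1 - (\<Sum>i<k. p i))"
    by (intro sums_diff assms sums_If_finite_set) simp
  moreover have "(\<lambda>i. p i - (if i \<in> {..<k} then p i else 0)) = (\<lambda>i. if k \<le> i then p i else 0)"
    by auto
  ultimately show ?thesis by (simp add: tail_mass_def)
qed

lemma tail_mass_nonneg:
  assumes "\<And>i. 0 \<le> p i" "p sums 1"
  shows "0 \<le> tail_mass p k"
  using sums_le[OF _ sums_zero sums_tail_mass[OF assms(2)]] assms(1) by simp

lemma tail_mass_tendsto_0:
  assumes "p sums 1"
  shows "tail_mass p \<longlonglongrightarrow> 0"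
proof -
  have "(\<lambda>k. 1 - (\<Sum>i<k. p i)) \<longlonglongrightarrow> 1 - 1"
    using assms unfolding sums_def by (intro tendsto_intros)
  then show ?thesis by (simp add: tail_mass_def[abs_def])
qed

lemma decseq_tail_mass: "(\<And>i. 0 \<le> p i) \<Longrightarrow> decseq (tail_mass p)"
  by (rule decseq_SucI) (simp add: tail_mass_Suc)

lemma cdfN_eq_tail_mass: "cdfN p x = 1 - tail_mass p (Suc (nat \<lfloor>x\<rfloor>))"
  by (simp add: cdfN_def tail_mass_def lessThan_Suc_atMost)

lemma cdfN_pistar:
  assumes "th > 0"
  shows "cdfN (pistar th) x = 1 - pitail th (Suc (nat \<lfloor>x\<rfloor>))"
proof -
  have "cdfN (pistar th) x = (\<Sum>n<Suc (nat \<lfloor>x\<rfloor>). pitail th n - pitail th (Suc n))"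
    unfolding cdfN_def pistar_eq_pitail_diff[OF assms] by (simp add: lessThan_Suc_atMost)
  then show ?thesis by (simp add: sum_lessThan_telescope')
qed

lemma moment_sums_iff:
  fixes A :: "nat \<Rightarrow> real"
  assumes "decseq A" "A \<longlonglongrightarrow> 0" "m \<ge> 1"
  shows "(\<lambda>j. real j ^ m * (A j - A (Suc j))) sums s \<longleftrightarrow> (\<lambda>n. power_incr m n * A n) sums s"
  using sums_summation_by_parts_iff[OF assms(1,2), of "power_incr m" s] power_incr_nonneg
  unfolding sum_power_incr[OF assms(3)] by blast

lemma summable_power_incr_pitail:
  assumes "th > 0"
  shows "summable (\<lambda>k. power_incr m k * pitail th k)"
proof (rule summable_comparison_test')
  show "summable (\<lambda>k. (0 + real k) ^ m * (th ^ k / fact k))"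
    using assms by (intro summable_power_poisson) auto
  fix k
  have "power_incr m k * pitail th k \<le> real k ^ m * (th ^ k / fact k)"
    using power_incr_nonneg[of m k] pitail_nonneg[OF assms, of k] power_incr_le_power[of m k]
      pitail_le_power_fact[OF assms, of k]
    by (intro mult_mono) auto
  then show "norm (power_incr m k * pitail th k) \<le> (0 + real k) ^ m * (th ^ k / fact k)"
    using power_incr_nonneg[of m k] pitail_nonneg[OF assms, of k] by simp
qed

lemma poisson_incr_le_hfun:
  assumes "th \<ge> 0" "m \<ge> 1" "k \<ge> 1"
  shows "poisson_incr th m k \<le> real m * power_incr m k * hfun th m 1"
proof -
  have "poisson_density th \<rho> * power_incr m (k + \<rho>)
      \<le> real m * power_incr m k * (poisson_density th \<rho> * (1 + real \<rho>) ^ (m - 1))" for \<rho>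
  proof -
    have "real (k + \<rho>) \<le> real k * (1 + real \<rho>)"
      using assms mult_right_mono[of 1 "real k" "real \<rho>"] by (simp add: algebra_simps)
    then have "real (k + \<rho>) ^ (m - 1) \<le> (real k * (1 + real \<rho>)) ^ (m - 1)"
      by (intro power_mono) auto
    then have "power_incr m (k + \<rho>) \<le> real m * (real k ^ (m - 1) * (1 + real \<rho>) ^ (m - 1))"
      using power_incr_le[of m "k + \<rho>"]
      by (simp add: power_mult_distrib) (meson mult_left_mono of_nat_0_le_iff order.trans)
    also have "\<dots> \<le> real m * (power_incr m k * (1 + real \<rho>) ^ (m - 1))"
      using power_incr_ge[OF assms(3,2)] by (intro mult_left_mono mult_right_mono) auto
    finally have "power_incr m (k + \<rho>) \<le> real m * (power_incr m k * (1 + real \<rho>) ^ (m - 1))" .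
    then have "poisson_density th \<rho> * power_incr m (k + \<rho>)
        \<le> poisson_density th \<rho> * (real m * (power_incr m k * (1 + real \<rho>) ^ (m - 1)))"
      using poisson_density_nonneg[OF assms(1)] by (rule mult_left_mono)
    then show ?thesis by (simp add: mult_ac)
  qed
  then have "poisson_incr th m k
      \<le> (\<Sum>\<rho>. real m * power_incr m k * (poisson_density th \<rho> * (1 + real \<rho>) ^ (m - 1)))"
    unfolding poisson_incr_def using assms summable_hfun[OF assms(1), of 1 m]
    by (intro suminf_le summable_poisson_incr summable_mult) auto
  also have "\<dots> = real m * power_incr m k * hfun th m 1"
    using suminf_mult[OF summable_hfun[OF assms(1), of 1 m]] by (simp add: hfun_eq add_ac)
  finally show ?thesis .
qed

definition bcoef_moment :: "real \<Rightarrow> real \<Rightarrow> nat \<Rightarrow> real \<Rightarrow> nat \<Rightarrow> real" where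
  "bcoef_moment lam mu m t k = (\<Sum>r. power_incr m (k + r) * bcoef lam mu r k t)"

context
  fixes lam mu t :: real
  assumes lam: "lam > 0" and mu: "mu > 0" and t: "t \<ge> 0"
begin

lemma bcoef_eq: "bcoef lam mu r k t = exp (- (lam + mu * real k) * t) * (Lam lam mu t ^ r / fact r)"
  unfolding bcoef_def by simp

lemma summable_bcoef_moment: "summable (\<lambda>r. power_incr m (k + r) * bcoef lam mu r k t)"
proof -
  have "summable (\<lambda>r. exp (- (lam + mu * real k) * t) * (power_incr m (k + r) * (Lam lam mu t ^ r / fact r)))"
    using summable_power_incr_poisson[of "Lam lam mu t" m k] Lam_bounds[OF lam mu t] by (intro summable_mult) auto
  then show ?thesis by (simp add: bcoef_eq mult_ac)
qed

lemma bcoef_moment_nonneg: "0 \<le> bcoef_moment lam mu m t k"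
  unfolding bcoef_moment_def
  by (intro suminf_nonneg summable_bcoef_moment mult_nonneg_nonneg power_incr_nonneg bcoef_nonneg lam mu t)

text \<open>Splitting \<open>lam / mu = Lam lam mu t + e\<close>, the Poisson weights of mean \<open>Lam lam mu t\<close> in \<open>bcoef\<close> are
  dominated by those of mean \<open>lam / mu\<close>; the exponential prefactors collect into the decay rate.\<close>

lemma bcoef_moment_le:
  assumes "k \<ge> 1"
  shows "bcoef_moment lam mu m t k
    \<le> exp (- mu * t - (lam / mu) * (exp (- mu * t) + mu * t - 1)) * poisson_incr (lam / mu) m k"
proof -
  define L where "L = Lam lam mu t"
  define e where "e = lam / mu * exp (- mu * t)"
  define E where "E = exp (- (lam + mu * real k) * t)"
  have Le: "L + e = lam / mu" unfolding L_def e_def Lam_def by (simp add: algebra_simps)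
  have L0: "0 \<le> L" unfolding L_def using Lam_bounds[OF lam mu t] by simp
  have e0: "0 \<le> e" unfolding e_def using lam mu by simp
  have sth: "summable (\<lambda>r. power_incr m (k + r) * ((L + e) ^ r / fact r))"
    unfolding Le using summable_power_incr_poisson[of "lam / mu" m k] lam mu by simp
  have incr_mono: "power_incr m (k + r) \<le> power_incr m (k + Suc r)" for r
    by (simp add: power_incr_mono)
  note mono = poisson_series_mono[of "\<lambda>r. power_incr m (k + r)", OF power_incr_nonneg incr_mono L0 e0 sth]
  have "bcoef_moment lam mu m t k = E * (\<Sum>r. power_incr m (k + r) * (L ^ r / fact r))"
    unfolding bcoef_moment_def bcoef_eq E_def L_def
    by (subst suminf_mult[symmetric]) (use mono(1)[unfolded L_def] in \<open>auto simp: mult_ac\<close>)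
  also have "\<dots> \<le> E * ((\<Sum>r. power_incr m (k + r) * ((L + e) ^ r / fact r)) / exp e)"
    unfolding E_def using mono(2) by (intro mult_left_mono) (auto simp: pos_le_divide_eq)
  also have "\<dots> = (E * exp (- e) * exp (lam / mu)) * poisson_incr (lam / mu) m k"
  proof -
    have "poisson_incr (lam / mu) m k = exp (- (lam / mu)) * (\<Sum>r. power_incr m (k + r) * ((L + e) ^ r / fact r))"
      unfolding poisson_incr_def Le poisson_density_def
      by (subst suminf_mult[symmetric]) (use sth[unfolded Le] in \<open>auto simp: mult_ac\<close>)
    then show ?thesis by (simp add: exp_minus field_simps)
  qed
  also have "\<dots> \<le> exp (- mu * t - (lam / mu) * (exp (- mu * t) + mu * t - 1)) * poisson_incr (lam / mu) m k"
  proof (intro mult_right_mono poisson_incr_nonneg)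
    have "mu * t \<le> mu * real k * t" "lam / mu * (mu * t) = lam * t"
      using assms mu t by (simp_all add: mult_right_mono mult_left_mono)
    then have "- (lam + mu * real k) * t - e + lam / mu \<le> - mu * t - lam / mu * (exp (- mu * t) + mu * t - 1)"
      unfolding e_def by (simp add: algebra_simps)
    then show "E * exp (- e) * exp (lam / mu) \<le> exp (- mu * t - (lam / mu) * (exp (- mu * t) + mu * t - 1))"
      unfolding E_def by (simp flip: exp_add)
  qed (use lam mu in auto)
  finally show ?thesis .
qed

end

context
  fixes lam mu t :: real and m :: nat and tau :: "nat \<Rightarrow> real"
  assumes lam: "lam > 0" and mu: "mu > 0" and m: "m \<ge> 1"
    and tau_nonneg: "\<And>n. tau n \<ge> 0" and tau_sums: "tau sums 1"
    and tau_moment: "summable (\<lambda>n. real n ^ m * tau n)" and t: "t \<ge> 0"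
begin

private lemma th_pos: "lam / mu > 0"
  using lam mu by simp

definition tail_diff :: "nat \<Rightarrow> real" where
  "tail_diff k = tail_mass tau k - pitail (lam / mu) k"

text \<open>\<open>pitail (lam / mu) n + tail_excess n\<close> is \<open>P(X(t) \<ge> n)\<close> for initial distribution \<open>tau\<close>.\<close>

definition tail_excess :: "nat \<Rightarrow> real" where
  "tail_excess n = (\<Sum>k\<in>{1..n}. bcoef lam mu (n - k) k t * tail_diff k)"

lemma tail_diff_0 [simp]: "tail_diff 0 = 0"
  by (simp add: tail_diff_def)

lemma sums_tau_tail_gap: "(\<lambda>i. tau i * tail_gap (lam / mu) k i) sums tail_diff k"
proof -
  have "(\<lambda>i. (if k \<le> i then tau i else 0) - pitail (lam / mu) k * tau i) sums (tail_mass tau k - pitail (lam / mu) k * 1)"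
    by (intro sums_diff sums_tail_mass sums_mult tau_sums)
  moreover have "(\<lambda>i. (if k \<le> i then tau i else 0) - pitail (lam / mu) k * tau i) = (\<lambda>i. tau i * tail_gap (lam / mu) k i)"
    by (auto simp: tail_gap_def algebra_simps)
  ultimately show ?thesis by (simp add: tail_diff_def)
qed

lemma sums_tau_tail_prob:
  "(\<lambda>i. tau i * tail_prob lam mu n t i) sums (pitail (lam / mu) n + tail_excess n)"
proof -
  have "(\<lambda>i. pitail (lam / mu) n * tau i + (\<Sum>k\<in>{1..n}. bcoef lam mu (n - k) k t * (tau i * tail_gap (lam / mu) k i)))
      sums (pitail (lam / mu) n * 1 + (\<Sum>k\<in>{1..n}. bcoef lam mu (n - k) k t * tail_diff k))"
    by (intro sums_add sums_mult tau_sums sums_sum sums_tau_tail_gap)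
  then show ?thesis
    by (simp add: tail_prob_def tail_excess_def algebra_simps sum_distrib_left)
qed

lemma sums_tau_ptrans:
  "(\<lambda>i. tau i * ptrans lam mu t i j)
     sums ((pitail (lam / mu) j + tail_excess j) - (pitail (lam / mu) (Suc j) + tail_excess (Suc j)))"
  using sums_diff[OF sums_tau_tail_prob sums_tau_tail_prob]
  by (simp add: ptrans_eq_ptrans_closed[OF lam mu t] ptrans_closed_def algebra_simps)

lemma decseq_tail_at_t: "decseq (\<lambda>n. pitail (lam / mu) n + tail_excess n)"
proof (rule decseq_SucI)
  fix j
  show "pitail (lam / mu) (Suc j) + tail_excess (Suc j) \<le> pitail (lam / mu) j + tail_excess j"
    using sums_le[OF _ sums_zero sums_tau_ptrans[of j]] tau_nonneg ptrans_closed_nonneg[OF lam mu t]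
    by (simp add: ptrans_eq_ptrans_closed[OF lam mu t])
qed

lemma summable_power_incr_tail_mass: "summable (\<lambda>k. power_incr m k * tail_mass tau k)"
proof -
  have "(\<lambda>j. real j ^ m * (tail_mass tau j - tail_mass tau (Suc j))) sums (\<Sum>n. real n ^ m * tau n)"
    using summable_sums[OF tau_moment] by (simp add: tail_mass_Suc)
  then show ?thesis
    using moment_sums_iff[OF decseq_tail_mass[OF tau_nonneg] tail_mass_tendsto_0[OF tau_sums] m]
    by (auto intro: sums_summable)
qed

lemma summable_tail_diff_poisson_incr: "summable (\<lambda>k. \<bar>tail_diff k\<bar> * poisson_incr (lam / mu) m k)"
proof (rule summable_comparison_test')
  show "summable (\<lambda>k. real m * hfun (lam / mu) m 1 * (power_incr m k * tail_mass tau k + power_incr m k * pitail (lam / mu) k))"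
    by (intro summable_mult summable_add summable_power_incr_tail_mass summable_power_incr_pitail th_pos)
  fix k
  show "norm (\<bar>tail_diff k\<bar> * poisson_incr (lam / mu) m k)
     \<le> real m * hfun (lam / mu) m 1 * (power_incr m k * tail_mass tau k + power_incr m k * pitail (lam / mu) k)"
  proof (cases "k = 0")
    case False
    have "\<bar>tail_diff k\<bar> \<le> tail_mass tau k + pitail (lam / mu) k"
      unfolding tail_diff_def using tail_mass_nonneg[OF tau_nonneg tau_sums, of k] pitail_nonneg[OF th_pos, of k]
      by arith
    then have "\<bar>tail_diff k\<bar> * poisson_incr (lam / mu) m k
        \<le> (tail_mass tau k + pitail (lam / mu) k) * (real m * power_incr m k * hfun (lam / mu) m 1)"
      using False poisson_incr_le_hfun[of "lam / mu" m k] poisson_incr_nonneg[of "lam / mu" m k] th_pos m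
      by (intro mult_mono) auto
    then show ?thesis
      using poisson_incr_nonneg[of "lam / mu" m k] th_pos by (simp add: abs_mult algebra_simps)
  qed (use hfun_nonneg[of "lam / mu" 1 m] th_pos power_incr_nonneg tail_mass_nonneg[OF tau_nonneg tau_sums]
          pitail_nonneg[OF th_pos] in auto)
qed

lemma bcoef_moment_le_decay:
  "\<bar>tail_diff k\<bar> * bcoef_moment lam mu m t k
     \<le> exp (- mu * t - (lam / mu) * (exp (- mu * t) + mu * t - 1)) * (\<bar>tail_diff k\<bar> * poisson_incr (lam / mu) m k)"
  using bcoef_moment_le[OF lam mu t, of k m] by (cases "k = 0") (auto simp: mult_left_mono mult_ac)

lemma summable_tail_diff_bcoef_moment: "summable (\<lambda>k. \<bar>tail_diff k\<bar> * bcoef_moment lam mu m t k)"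
  using bcoef_moment_nonneg[OF lam mu t] bcoef_moment_le_decay
  by (intro summable_comparison_test'[OF summable_mult[OF summable_tail_diff_poisson_incr]]) auto

lemma sums_power_incr_tail_excess:
  shows "(\<lambda>n. power_incr m n * tail_excess n) sums (\<Sum>k. tail_diff k * bcoef_moment lam mu m t k)"
    and "summable (\<lambda>n. power_incr m n * \<bar>tail_excess n\<bar>)"
proof -
  define f where "f k r = tail_diff k * (power_incr m (k + r) * bcoef lam mu r k t)" for k r
  have abs_f: "\<bar>f k r\<bar> = \<bar>tail_diff k\<bar> * (power_incr m (k + r) * bcoef lam mu r k t)" for k r
    unfolding f_def using power_incr_nonneg bcoef_nonneg[OF lam mu t] by (simp add: abs_mult)
  have rows: "summable (\<lambda>r. \<bar>f k r\<bar>)" for k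
    unfolding abs_f by (intro summable_mult summable_bcoef_moment[OF lam mu t])
  have "(\<Sum>r. \<bar>f k r\<bar>) = \<bar>tail_diff k\<bar> * bcoef_moment lam mu m t k" for k
    unfolding abs_f bcoef_moment_def by (rule suminf_mult[OF summable_bcoef_moment[OF lam mu t]])
  then have total: "summable (\<lambda>k. \<Sum>r. \<bar>f k r\<bar>)"
    using summable_tail_diff_bcoef_moment by simp
  have rows_sum: "(\<Sum>r. f k r) = tail_diff k * bcoef_moment lam mu m t k" for k
    unfolding f_def bcoef_moment_def by (rule suminf_mult[OF summable_bcoef_moment[OF lam mu t]])
  have diagonal: "(\<Sum>k\<le>n. f k (n - k)) = power_incr m n * tail_excess n" for n
  proof -
    have "(\<Sum>k\<le>n. f k (n - k)) = power_incr m n * (\<Sum>k\<le>n. bcoef lam mu (n - k) k t * tail_diff k)"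
      unfolding f_def sum_distrib_left by (intro sum.cong) (auto simp: mult_ac)
    also have "(\<Sum>k\<le>n. bcoef lam mu (n - k) k t * tail_diff k) = tail_excess n"
      unfolding tail_excess_def by (rule sum.mono_neutral_right) (auto simp: Suc_le_eq)
    finally show ?thesis .
  qed
  show "(\<lambda>n. power_incr m n * tail_excess n) sums (\<Sum>k. tail_diff k * bcoef_moment lam mu m t k)"
    using sums_diagonal(1)[OF rows total] unfolding diagonal rows_sum .
  have "\<bar>power_incr m n * tail_excess n\<bar> \<le> (\<Sum>k\<le>n. \<bar>f k (n - k)\<bar>)" for n
    unfolding diagonal[symmetric] by (rule sum_abs)
  then show "summable (\<lambda>n. power_incr m n * \<bar>tail_excess n\<bar>)"
    using power_incr_nonneg
    by (intro summable_comparison_test'[OF sums_diagonal(2)[OF rows total]]) (simp add: abs_mult)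
qed

lemma tail_excess_tendsto_0: "tail_excess \<longlonglongrightarrow> 0"
proof (rule Lim_null_comparison)
  show "(\<lambda>n. power_incr m n * \<bar>tail_excess n\<bar>) \<longlonglongrightarrow> 0"
    by (rule summable_LIMSEQ_zero[OF sums_power_incr_tail_excess(2)])
  have "\<bar>tail_excess n\<bar> \<le> power_incr m n * \<bar>tail_excess n\<bar>" for n
  proof (cases "n = 0")
    case False
    then have "1 \<le> real n ^ (m - 1)"
      by (intro one_le_power) simp
    also have "\<dots> \<le> power_incr m n"
      using False m by (intro power_incr_ge) auto
    finally have "1 \<le> power_incr m n" .
    then show ?thesis by (simp add: mult_le_cancel_right1)
  qed (simp add: tail_excess_def)
  then show "\<forall>\<^sub>F n in sequentially. norm (tail_excess n) \<le> power_incr m n * \<bar>tail_excess n\<bar>"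
    by simp
qed

lemma moment_difference_eq:
  "(\<Sum>j. real j ^ m * distX lam mu tau t j) - (\<Sum>j. real j ^ m * pistar (lam / mu) j)
     = (\<Sum>k. tail_diff k * bcoef_moment lam mu m t k)"
proof -
  let ?A = "\<lambda>n. pitail (lam / mu) n + tail_excess n"
  have A_lim: "?A \<longlonglongrightarrow> 0"
    using tendsto_add[OF pitail_tendsto_0[OF th_pos] tail_excess_tendsto_0] by simp
  have "(\<lambda>n. power_incr m n * pitail (lam / mu) n + power_incr m n * tail_excess n)
      sums ((\<Sum>n. power_incr m n * pitail (lam / mu) n) + (\<Sum>k. tail_diff k * bcoef_moment lam mu m t k))"
    by (intro sums_add summable_sums summable_power_incr_pitail th_pos sums_power_incr_tail_excess)
  then have "(\<lambda>j. real j ^ m * (?A j - ?A (Suc j)))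
      sums ((\<Sum>n. power_incr m n * pitail (lam / mu) n) + (\<Sum>k. tail_diff k * bcoef_moment lam mu m t k))"
    using moment_sums_iff[OF decseq_tail_at_t A_lim m] by (simp add: algebra_simps)
  moreover have "distX lam mu tau t j = ?A j - ?A (Suc j)" for j
    unfolding distX_def using sums_tau_ptrans[of j] by (simp add: sums_iff)
  moreover have "(\<lambda>j. real j ^ m * pistar (lam / mu) j) sums (\<Sum>n. power_incr m n * pitail (lam / mu) n)"
    using moment_sums_iff[OF decseq_SucI[of "pitail (lam / mu)", OF pitail_Suc_le[OF th_pos]] pitail_tendsto_0[OF th_pos] m]
      summable_sums[OF summable_power_incr_pitail[OF th_pos]]
    by (simp add: pistar_eq_pitail_diff[OF th_pos])
  ultimately show ?thesis by (simp add: sums_iff)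
qed

lemma Kh_eq_sum: "real m * Kh (lam / mu) m tau = (\<Sum>k. \<bar>tail_diff k\<bar> * poisson_incr (lam / mu) m k)"
proof -
  have "Kh (lam / mu) m tau * real m = (\<Sum>n. \<bar>tail_diff (Suc n)\<bar> * poisson_incr (lam / mu) m (Suc n))"
    unfolding Kh_def
  proof (rule set_integral_hfun_step)
    show "\<bar>cdfN tau x - cdfN (pistar (lam / mu)) x\<bar> = \<bar>tail_diff (Suc (nat \<lfloor>x\<rfloor>))\<bar>" for x
      unfolding cdfN_pistar[OF th_pos] cdfN_eq_tail_mass[of tau] tail_diff_def by simp
    show "summable (\<lambda>n. \<bar>tail_diff (Suc n)\<bar> * poisson_incr (lam / mu) m (Suc n))"
      using summable_tail_diff_poisson_incr by (subst summable_Suc_iff)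
  qed (use th_pos m in auto)
  also have "\<dots> = (\<Sum>k. \<bar>tail_diff k\<bar> * poisson_incr (lam / mu) m k)"
    using suminf_split_head[OF summable_tail_diff_poisson_incr] by simp
  finally show ?thesis by (simp add: mult.commute)
qed

end

theorem mainTheorem6:
  fixes lam mu t :: real and m :: nat and tau :: "nat \<Rightarrow> real"
  assumes "lam > 0" and "mu > 0" and "m \<ge> 1"
    and "\<And>n. tau n \<ge> 0" and "tau sums 1"
    and "summable (\<lambda>n. real n ^ m * tau n)"
    and "t \<ge> 0"
  shows "\<bar>(\<Sum>j. real j ^ m * distX lam mu tau t j) - (\<Sum>j. real j ^ m * pistar (lam / mu) j)\<bar>
         \<le> real m * Kh (lam / mu) m tau
           * exp (- mu * t - (lam / mu) * (exp (- mu * t) + mu * t - 1))"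
proof -
  let ?c = "exp (- mu * t - (lam / mu) * (exp (- mu * t) + mu * t - 1))"
  let ?d = "tail_diff lam mu tau" and ?S = "bcoef_moment lam mu m t" and ?M = "poisson_incr (lam / mu) m"
  have summable: "summable (\<lambda>k. \<bar>?d k * ?S k\<bar>)"
    using summable_tail_diff_bcoef_moment[OF assms] bcoef_moment_nonneg[OF assms(1,2,7)]
    by (simp add: abs_mult)
  have "\<bar>(\<Sum>j. real j ^ m * distX lam mu tau t j) - (\<Sum>j. real j ^ m * pistar (lam / mu) j)\<bar>
      = \<bar>\<Sum>k. ?d k * ?S k\<bar>"
    by (simp only: moment_difference_eq[OF assms])
  also have "\<dots> \<le> (\<Sum>k. \<bar>?d k * ?S k\<bar>)"
    by (rule summable_rabs[OF summable])
  also have "\<dots> \<le> (\<Sum>k. ?c * (\<bar>?d k\<bar> * ?M k))"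
    using bcoef_moment_le_decay[OF assms] bcoef_moment_nonneg[OF assms(1,2,7)]
    by (intro suminf_le summable summable_mult summable_tail_diff_poisson_incr[OF assms]) (simp add: abs_mult)
  also have "\<dots> = ?c * (real m * Kh (lam / mu) m tau)"
    by (simp add: suminf_mult[OF summable_tail_diff_poisson_incr[OF assms]] Kh_eq_sum[OF assms])
  finally show ?thesis by (simp add: mult_ac)
qed

end
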